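(* Let $n_x,n_\beta\ge 1$, $A\in\mathbb{R}^{n_x\times n_x}$, $u\in\mathbb{R}^{n_x}$, $L\in\mathbb{R}^{n_x\times n_\beta}$, $Q_\beta\in\mathbb{R}^{n_\beta\times n_\beta}$ a diffusion (covariance) matrix, $\overline{x}_a\in\mathbb{R}^{n_x}$, $P_a\in\mathbb{R}^{n_x\times n_x}$ a covariance matrix, $\mu>0$ and $\Delta t_k>0$. For $t\ge 0$ define $$m(t)=\exp(At)\overline{x}_a+\int_0^t\exp(A\tau)\,d\tau\, u,\qquad C(t)=\exp(At)P_a\exp(A^Tt)+\int_0^t \exp(A\tau)LQ_\beta L^T\exp(A^T\tau)\,d\tau .$$ Let $T$ be a random time lag with density $p_k(t)=\frac{\mu}{1-e^{-\mu\Delta t_k}}e^{-\mu t}\chi_{[0,\Delta t_k)}(t)$, and consider the single-target birth density $p_k(x)=\int_0^{\Delta t_k}\mathcal{N}(x;m(t),C(t))p_k(t)\,dt$ (a mixture whose conditional mean and covariance given lag $t$ are $\mathrm{E}[x_k|t]=m(t)$ and $\mathrm{C}[x_k|t]=C(t)$). Then the mean of $p_k$ is $$\overline{x}_{b,k}=\mathrm{E}[m(T)]=\overline{x}_{b,k,1}+\overline{x}_{b,k,2},$$ where, with $I$ the $n_x\times n_x$ identity and $0_{m,n}$ the $m\times n$ zero matrix, $$\overline{x}_{b,k,1}=\frac{\mu}{1-e^{-\mu\Delta t_k}}\begin{bmatrix}I & 0_{n_x,1}\end{bmatrix}\exp(\overline{A}_b\Delta t_k)\begin{bmatrix}0_{n_x,1}\\1\end{bmatrix},\quad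 \overline{x}_{b,k,2}=\frac{\mu}{1-e^{-\mu\Delta t_k}}\begin{bmatrix}I & 0_{n_x,2}\end{bmatrix}\exp(\overline{A}_{b,u}\Delta t_k)\begin{bmatrix}0_{n_x+1,1}\\1\end{bmatrix},$$ $$\overline{A}_b=\begin{bmatrix}A-\mu I & \overline{x}_a\\ 0_{1,n_x} & 0\end{bmatrix},\qquad \overline{A}_{b,u}=\begin{bmatrix}A-\mu I & u & 0_{n_x,1}\\ 0_{1,n_x} & -\mu & 1\\ 0_{1,n_x} & 0 & 0\end{bmatrix}.$$ The covariance matrix of $p_k$ is $P_{b,k}=\mathrm{C}[m(T)]+\mathrm{E}[C(T)]$, where $$\mathrm{E}[C(T)]=-\frac{e^{-\mu\Delta t_k}}{1-e^{-\mu\Delta t_k}}\int_0^{\Delta t_k}\exp(A\tau)LQ_\beta L^T\exp(A^T\tau)\,d\tau+\frac{1}{1-e^{-\mu\Delta t_k}}\int_0^{\Delta t_k}\exp\big((A-\tfrac{\mu}{2}I)t\big)C_b\exp\big((A-\tfrac{\mu}{2}I)^Tt\big)\,dt,$$ with $C_b=LQ_\beta L^T+\mu P_a$, and $$\mathrm{C}[m(T)]=\Sigma_{xx}+\Sigma_{xu}+\Sigma_{xu}^T+\Sigma_{uu}-\overline{x}_{b,k}\overline{x}_{b,k}^T,$$ where $$\Sigma_{xx}=\frac{\mu}{1-e^{-\mu\Delta t_k}}\int_0^{\Delta t_k}\exp\big((A-\tfrac{\mu}{2}I)t\big)\overline{x}_a\overline{x}_a^T\exp\big((A-\tfrac{\mu}{2}I)^Tt\big)dt,$$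 $$\Sigma_{xu}=\frac{\mu}{1-e^{-\mu\Delta t_k}}\int_0^{\Delta t_k}\exp\big((A-\mu I)t\big)\overline{x}_a u^T\Big(\int_0^t\exp(A^T\tau)d\tau\Big)dt,$$ $\Sigma_{uu}=-\Sigma_{uu,1}+\Sigma_{uu,2}+\Sigma_{uu,2}^T$, $$\Sigma_{uu,1}=\frac{e^{-\mu\Delta t_k}}{1-e^{-\mu\Delta t_k}}\int_0^{\Delta t_k}\exp(A\tau)d\tau\, uu^T\int_0^{\Delta t_k}\exp(A^T\tau)d\tau,$$ $$\Sigma_{uu,2}=\frac{1}{1-e^{-\mu\Delta t_k}}\int_0^{\Delta t_k}\exp\big((A-\mu I)t\big)uu^T\Big(\int_0^t\exp(A^T\tau)d\tau\Big)dt.$$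
   Context: This arises from a continuous-time multi-target model: targets appear at times of a Poisson process, each appearing target is distributed as $\mathcal{N}(\overline{x}_a,P_a)$ at appearance, its life span is exponential with rate $\mu$, and it moves according to the linear time-invariant SDE $dx(t)=Ax(t)dt+u\,dt+L\,d\beta(t)$ with $\beta$ a Brownian motion with diffusion matrix $Q_\beta$. A target newly born at measurement time $t_k$ (with $\Delta t_k=t_k-t_{k-1}$) is one that appeared at time $t_k-t$ with lag $t\in[0,\Delta t_k)$ and is still alive at $t_k$; the lag has the truncated exponential density $p_k(t)$ above and, given the lag, the target state at $t_k$ is Gaussian with mean $m(t)$ and covariance $C(t)$. $\chi_{[0,\Delta t_k)}$ is the indicator function of $[0,\Delta t_k)$. *)

theory Defs
  imports "HOL-Analysis.Analysis" "HOL-Probability.Probability"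
begin

definition matpow :: "real^'n^'n \<Rightarrow> nat \<Rightarrow> real^'n^'n" where
  "matpow M k = ((\<lambda>X. M ** X) ^^ k) (mat 1)"

definition mexp :: "real^'n^'n \<Rightarrow> real^'n^'n" where
  "mexp M = (\<Sum>k. (1 / fact k) *\<^sub>R matpow M k)"

definition outer :: "real^'m \<Rightarrow> real^'n \<Rightarrow> real^'n^'m" where
  "outer x y = (\<chi> i j. x $ i * y $ j)"

definition cov_matrix :: "real^'n^'n \<Rightarrow> bool" where
  "cov_matrix M \<longleftrightarrow> transpose M = M \<and> (\<forall>x. 0 \<le> x \<bullet> (M *v x))"

text \<open>Augmented matrix Ab = [[A - mu I, xa],[0, 0]] of size (n+1); the extra
  index is None.\<close>
definition Ab_mat :: "real^'n^'n \<Rightarrow> real \<Rightarrow> real^'n \<Rightarrow> real^('n option)^('n option)" where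
  "Ab_mat A mu xa = (\<chi> i j. case (i, j) of
      (Some i', Some j') \<Rightarrow> (A - mu *\<^sub>R mat 1) $ i' $ j'
    | (Some i', None) \<Rightarrow> xa $ i'
    | (None, _) \<Rightarrow> 0)"

text \<open>Augmented matrix Abu = [[A - mu I, u, 0],[0, -mu, 1],[0, 0, 0]] of size (n+2);
  index order: Some (Some i) for the state block, Some None for the second block,
  None for the last.\<close>
definition Abu_mat :: "real^'n^'n \<Rightarrow> real \<Rightarrow> real^'n \<Rightarrow> real^('n option option)^('n option option)" where
  "Abu_mat A mu u = (\<chi> i j. case (i, j) of
      (Some (Some i'), Some (Some j')) \<Rightarrow> (A - mu *\<^sub>R mat 1) $ i' $ j'
    | (Some (Some i'), Some None) \<Rightarrow> u $ i'
    | (Some (Some i'), None) \<Rightarrow> 0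
    | (Some None, Some (Some j')) \<Rightarrow> 0
    | (Some None, Some None) \<Rightarrow> - mu
    | (Some None, None) \<Rightarrow> 1
    | (None, _) \<Rightarrow> 0)"

end

theory Submission
  imports Defs
begin

text \<open>Given the lag \<open>t\<close>, the state has mean \<open>m t\<close> and covariance \<open>C t\<close>, so by the laws of total
  expectation and total covariance the birth density has mean \<open>E[m T]\<close> and covariance
  \<open>E[C T] + Cov[m T]\<close>. Each lag average is an integral over \<open>[0, \<Delta>]\<close> of \<open>exp (- mu t)\<close> times
  matrix exponentials. The weight is absorbed by \<open>exp (t (A - c I)) = exp (- c t) exp (t A)\<close>
  (with \<open>c = mu / 2\<close> on each side of a congruence), and integration by parts moves it off the
  inner integrals \<open>\<integral>\<^sub>0\<^sup>t\<close>. The two parts of the mean are the last columns of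
  \<open>exp (\<Delta> Ab)\<close> and \<open>exp (\<Delta> Abu)\<close>, identified by solving \<open>w' = Ab w\<close> and \<open>w' = Abu w\<close>
  explicitly and invoking uniqueness for linear ODEs.\<close>

section \<open>Matrix exponential\<close>

lemma matrix_add_rdistrib: "(B + C) ** A = B ** A + C ** A"
  by (simp add: matrix_matrix_mult_def vec_eq_iff sum.distrib[symmetric] distrib_right)

text \<open>The type \<open>real^'n^'n\<close> carries the componentwise product; the copy \<open>'n sqmat\<close> carries the
  matrix product and the operator norm, which makes it a real Banach algebra whose \<^const>\<open>exp\<close>
  is \<^const>\<open>mexp\<close>.\<close>

typedef 'n sqmat = "UNIV :: (real^'n^'n) set" morphisms mat_of_sqmat sqmat_of_mat by simp
setup_lifting type_definition_sqmat

instantiation sqmat :: (finite) real_vector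
begin
lift_definition zero_sqmat :: "'a sqmat" is "0" .
lift_definition plus_sqmat :: "'a sqmat \<Rightarrow> 'a sqmat \<Rightarrow> 'a sqmat" is "(+)" .
lift_definition minus_sqmat :: "'a sqmat \<Rightarrow> 'a sqmat \<Rightarrow> 'a sqmat" is "(-)" .
lift_definition uminus_sqmat :: "'a sqmat \<Rightarrow> 'a sqmat" is "uminus" .
lift_definition scaleR_sqmat :: "real \<Rightarrow> 'a sqmat \<Rightarrow> 'a sqmat" is "(*\<^sub>R)" .
instance by standard (transfer; simp add: algebra_simps)+
end

instantiation sqmat :: (finite) real_algebra_1
begin
lift_definition one_sqmat :: "'a sqmat" is "mat 1" .
lift_definition times_sqmat :: "'a sqmat \<Rightarrow> 'a sqmat \<Rightarrow> 'a sqmat" is "(**)" .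
instance
proof
  fix a b c :: "'a sqmat" and r :: real
  show "a * b * c = a * (b * c)" by transfer (simp add: matrix_mul_assoc)
  show "1 * a = a" by transfer simp
  show "a * 1 = a" by transfer simp
  show "(a + b) * c = a * c + b * c" by transfer (simp add: matrix_add_rdistrib)
  show "a * (b + c) = a * b + a * c" by transfer (simp add: matrix_add_ldistrib)
  show "(0::'a sqmat) \<noteq> 1" by transfer (simp add: vec_eq_iff mat_def)
  show "r *\<^sub>R a * b = r *\<^sub>R (a * b)" by transfer (simp add: scalar_matrix_assoc)
  show "a * r *\<^sub>R b = r *\<^sub>R (a * b)" by transfer (metis matrix_scalar_ac scalar_matrix_assoc)
qed
end

instantiation sqmat :: (finite) real_normed_algebra_1
begin
lift_definition norm_sqmat :: "'a sqmat \<Rightarrow> real" is "\<lambda>A. onorm ((*v) A)" .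
definition dist_sqmat :: "'a sqmat \<Rightarrow> 'a sqmat \<Rightarrow> real" where "dist_sqmat x y = norm (x - y)"
definition sgn_sqmat :: "'a sqmat \<Rightarrow> 'a sqmat" where "sgn_sqmat x = x /\<^sub>R norm x"
definition uniformity_sqmat :: "('a sqmat \<times> 'a sqmat) filter" where
  "uniformity_sqmat = (INF e\<in>{0<..}. principal {(x, y). dist x y < e})"
definition open_sqmat :: "'a sqmat set \<Rightarrow> bool" where
  "open_sqmat U = (\<forall>x\<in>U. \<forall>\<^sub>F (x', y) in uniformity. x' = x \<longrightarrow> y \<in> U)"
instance
proof
  fix x y :: "'a sqmat" and r :: real and U :: "'a sqmat set"
  show "dist x y = norm (x - y)" by (simp add: dist_sqmat_def)
  show "sgn x = x /\<^sub>R norm x" by (simp add: sgn_sqmat_def)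
  show "(uniformity :: ('a sqmat \<times> 'a sqmat) filter) = (INF e\<in>{0<..}. principal {(x, y). dist x y < e})"
    by (simp add: uniformity_sqmat_def)
  show "open U = (\<forall>x\<in>U. \<forall>\<^sub>F (x', y) in uniformity. x' = x \<longrightarrow> y \<in> U)"
    by (simp add: open_sqmat_def)
  show "(norm x = 0) = (x = 0)"
    by transfer (simp add: onorm_eq_0[OF matrix_vector_mul_bounded_linear] matrix_eq)
  show "norm (x + y) \<le> norm x + norm y"
  proof transfer
    fix A B :: "real^'a^'a"
    have "(*v) (A + B) = (\<lambda>x. A *v x + B *v x)" by (simp add: fun_eq_iff matrix_vector_mult_add_rdistrib)
    then show "onorm ((*v) (A + B)) \<le> onorm ((*v) A) + onorm ((*v) B)"
      using onorm_triangle[OF matrix_vector_mul_bounded_linear matrix_vector_mul_bounded_linear] by simp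
  qed
  show "norm (r *\<^sub>R x) = \<bar>r\<bar> * norm x"
  proof transfer
    fix r and A :: "real^'a^'a"
    have "(*v) (r *\<^sub>R A) = (\<lambda>x. r *\<^sub>R (A *v x))" by (simp add: fun_eq_iff scaleR_matrix_vector_assoc)
    then show "onorm ((*v) (r *\<^sub>R A)) = \<bar>r\<bar> * onorm ((*v) A)"
      using onorm_scaleR[OF matrix_vector_mul_bounded_linear] by simp
  qed
  show "norm (x * y) \<le> norm x * norm y"
  proof transfer
    fix A B :: "real^'a^'a"
    have "(*v) (A ** B) = (*v) A \<circ> (*v) B" by (simp add: fun_eq_iff matrix_vector_mul_assoc)
    then show "onorm ((*v) (A ** B)) \<le> onorm ((*v) A) * onorm ((*v) B)"
      using onorm_compose[OF matrix_vector_mul_bounded_linear matrix_vector_mul_bounded_linear] by simp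
  qed
  show "norm (1::'a sqmat) = 1"
  proof transfer
    have "(*v) (mat 1 :: real^'a^'a) = (\<lambda>x. x)" by (simp add: fun_eq_iff)
    then show "onorm ((*v) (mat 1 :: real^'a^'a)) = 1" by (simp add: onorm_id)
  qed
qed
end

lemma norm_le_sum_abs_entries:
  fixes A :: "real^'a^'b"
  shows "norm A \<le> (\<Sum>i\<in>UNIV. \<Sum>j\<in>UNIV. \<bar>A $ i $ j\<bar>)"
proof -
  have "norm A = L2_set (\<lambda>i. norm (A $ i)) UNIV" by (simp add: norm_vec_def)
  also have "\<dots> \<le> (\<Sum>i\<in>UNIV. norm (A $ i))" by (rule L2_set_le_sum) simp
  also have "\<dots> \<le> (\<Sum>i\<in>UNIV. \<Sum>j\<in>UNIV. \<bar>A $ i $ j\<bar>)"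
    by (rule sum_mono) (rule norm_le_l1_cart)
  finally show ?thesis .
qed

lemma norm_mat_of_sqmat_le: "norm (mat_of_sqmat X) \<le> real CARD('a) * real CARD('a) * norm (X :: 'a::finite sqmat)"
proof -
  have "norm (mat_of_sqmat X) \<le> (\<Sum>i\<in>UNIV. \<Sum>j\<in>UNIV. \<bar>mat_of_sqmat X $ i $ j\<bar>)"
    by (rule norm_le_sum_abs_entries)
  also have "\<dots> \<le> (\<Sum>i\<in>(UNIV::'a set). \<Sum>j\<in>(UNIV::'a set). norm X)"
    by (intro sum_mono) (simp add: norm_sqmat.rep_eq matrix_component_le_onorm)
  finally show ?thesis by simp
qed

lemma norm_sqmat_of_mat_le: "norm (sqmat_of_mat A :: 'a::finite sqmat) \<le> real CARD('a) * real CARD('a) * norm A"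
proof -
  have "norm (sqmat_of_mat A :: 'a sqmat) \<le> (\<Sum>i\<in>UNIV. \<Sum>j\<in>UNIV. \<bar>A $ i $ j\<bar>)"
    by (simp add: norm_sqmat.abs_eq eq_onp_def onorm_le_matrix_component_sum)
  also have "\<dots> \<le> (\<Sum>i\<in>(UNIV::'a set). \<Sum>j\<in>(UNIV::'a set). norm A)"
    by (intro sum_mono order_trans[OF component_le_norm_cart Finite_Cartesian_Product.norm_nth_le])
  finally show ?thesis by simp
qed

lemma bounded_linear_mat_of_sqmat: "bounded_linear (mat_of_sqmat :: 'a::finite sqmat \<Rightarrow> _)"
  by (rule bounded_linear_intro[where K="real CARD('a) * real CARD('a)"])
     (auto simp: plus_sqmat.rep_eq scaleR_sqmat.rep_eq mult.commute[of "norm _"] norm_mat_of_sqmat_le)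

lemma bounded_linear_sqmat_of_mat: "bounded_linear (sqmat_of_mat :: _ \<Rightarrow> 'a::finite sqmat)"
  by (rule bounded_linear_intro[where K="real CARD('a) * real CARD('a)"])
     (auto simp: plus_sqmat.abs_eq scaleR_sqmat.abs_eq eq_onp_def mult.commute[of "norm _"]
        norm_sqmat_of_mat_le)

instance sqmat :: (finite) banach
proof
  fix X :: "nat \<Rightarrow> 'a sqmat"
  assume "Cauchy X"
  then have "Cauchy (\<lambda>n. mat_of_sqmat (X n))"
    by (rule bounded_linear.Cauchy[OF bounded_linear_mat_of_sqmat])
  then obtain L where "(\<lambda>n. mat_of_sqmat (X n)) \<longlonglongrightarrow> L"
    using Cauchy_convergent_iff convergent_def by blast
  then have "(\<lambda>n. sqmat_of_mat (mat_of_sqmat (X n))) \<longlonglongrightarrow> sqmat_of_mat L"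
    by (rule bounded_linear.tendsto[OF bounded_linear_sqmat_of_mat])
  then show "convergent X" by (auto simp: convergent_def mat_of_sqmat_inverse)
qed

lemma sqmat_of_mat_scaleR: "sqmat_of_mat (t *\<^sub>R A) = t *\<^sub>R sqmat_of_mat A"
  by (simp add: scaleR_sqmat.abs_eq eq_onp_def)

lemma sqmat_of_mat_mult: "sqmat_of_mat (A ** B) = sqmat_of_mat A * sqmat_of_mat B"
  by (simp add: times_sqmat.abs_eq eq_onp_def)

lemma sqmat_of_mat_add: "sqmat_of_mat (A + B) = sqmat_of_mat A + sqmat_of_mat B"
  by (simp add: plus_sqmat.abs_eq eq_onp_def)

lemma sqmat_of_mat_one: "sqmat_of_mat (mat 1) = 1"
  by (simp add: one_sqmat.abs_eq eq_onp_def)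

lemma mat_of_sqmat_power: "mat_of_sqmat (X ^ k) = matpow (mat_of_sqmat X) k"
  by (induction k) (simp_all add: matpow_def one_sqmat.rep_eq times_sqmat.rep_eq)

lemma matpow_0: "matpow M 0 = mat 1"
  by (simp add: matpow_def)

lemma matpow_Suc: "matpow M (Suc k) = M ** matpow M k"
  by (simp add: matpow_def)

lemma matpow_Suc_right: "matpow M (Suc k) = matpow M k ** M"
  by (induction k) (simp_all add: matpow_0 matpow_Suc matrix_mul_assoc)

lemma sums_exp_sqmat: "(\<lambda>n. (1 / fact n) *\<^sub>R matpow (mat_of_sqmat X) n) sums mat_of_sqmat (exp X)"
proof -
  have "(\<lambda>n. X ^ n /\<^sub>R fact n) sums exp X"
    unfolding exp_def by (rule summable_sums[OF summable_exp_generic])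
  from bounded_linear.sums[OF bounded_linear_mat_of_sqmat this]
  show ?thesis by (simp add: scaleR_sqmat.rep_eq mat_of_sqmat_power divide_inverse_commute)
qed

lemma sums_mexp: "(\<lambda>n. (1 / fact n) *\<^sub>R matpow M n) sums mexp M"
  using sums_exp_sqmat[of "sqmat_of_mat M"] by (simp add: sqmat_of_mat_inverse mexp_def sums_iff)

lemma mexp_eq_exp: "mexp M = mat_of_sqmat (exp (sqmat_of_mat M))"
  using sums_exp_sqmat[of "sqmat_of_mat M"] sums_mexp[of M]
  by (simp add: sqmat_of_mat_inverse sums_unique2)

lemma mexp_zero [simp]: "mexp 0 = mat 1"
  by (simp add: mexp_eq_exp zero_sqmat.abs_eq[symmetric] one_sqmat.rep_eq)

lemma has_vector_derivative_mexp:
  "((\<lambda>t. mexp (t *\<^sub>R A)) has_vector_derivative A ** mexp (t *\<^sub>R A)) (at t within S)"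
proof -
  have "((\<lambda>t. exp (t *\<^sub>R sqmat_of_mat A)) has_vector_derivative
      sqmat_of_mat A * exp (t *\<^sub>R sqmat_of_mat A)) (at t within S)"
    using exp_scaleR_has_vector_derivative_left has_vector_derivative_at_within by blast
  from bounded_linear.has_vector_derivative[OF bounded_linear_mat_of_sqmat this]
  show ?thesis
    by (simp add: mexp_eq_exp sqmat_of_mat_scaleR times_sqmat.rep_eq sqmat_of_mat_inverse)
qed

lemma mexp_commute: "A ** mexp (t *\<^sub>R A) = mexp (t *\<^sub>R A) ** A"
proof -
  have "mat_of_sqmat (sqmat_of_mat A * exp (t *\<^sub>R sqmat_of_mat A))
      = mat_of_sqmat (exp (t *\<^sub>R sqmat_of_mat A) * sqmat_of_mat A)"
    by (simp only: exp_times_scaleR_commute)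
  then show ?thesis by (simp add: mexp_eq_exp sqmat_of_mat_scaleR times_sqmat.rep_eq sqmat_of_mat_inverse)
qed

lemma mexp_add_commuting:
  assumes "A ** B = B ** A"
  shows "mexp (A + B) = mexp A ** mexp B"
proof -
  have "sqmat_of_mat A * sqmat_of_mat B = sqmat_of_mat B * sqmat_of_mat A"
    using assms by (simp flip: sqmat_of_mat_mult)
  then have "exp (sqmat_of_mat A + sqmat_of_mat B) = exp (sqmat_of_mat A) * exp (sqmat_of_mat B)"
    by (rule exp_add_commuting)
  then show ?thesis by (simp add: mexp_eq_exp sqmat_of_mat_add times_sqmat.rep_eq)
qed

lemma mexp_scaleR_add: "mexp ((s + t) *\<^sub>R A) = mexp (s *\<^sub>R A) ** mexp (t *\<^sub>R A)"
  by (simp add: scaleR_add_left mexp_add_commuting matrix_scalar_ac scalar_matrix_assoc[symmetric])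

lemma mexp_mult_mexp_uminus: "mexp M ** mexp (- M) = mat 1"
  using mexp_scaleR_add[of 1 "- 1" M, symmetric] by simp

lemma mexp_scalar: "mexp (r *\<^sub>R mat 1) = exp r *\<^sub>R mat 1"
proof -
  have scalar: "sqmat_of_mat (r *\<^sub>R mat 1) = of_real r"
    by (simp add: sqmat_of_mat_scaleR sqmat_of_mat_one of_real_def)
  have "mexp (r *\<^sub>R mat 1) = mat_of_sqmat (of_real (exp r))"
    by (simp only: mexp_eq_exp scalar exp_of_real)
  then show ?thesis by (simp add: of_real_def scaleR_sqmat.rep_eq one_sqmat.rep_eq)
qed

lemma mexp_add_scalar: "mexp (A + s *\<^sub>R mat 1) = exp s *\<^sub>R mexp A"
proof -
  have "mexp (A + s *\<^sub>R mat 1) = mexp A ** mexp (s *\<^sub>R mat 1)"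
    by (rule mexp_add_commuting) (simp add: matrix_scalar_ac scalar_matrix_assoc[symmetric])
  then show ?thesis by (simp add: mexp_scalar matrix_scalar_ac)
qed

lemma mexp_shift: "mexp (t *\<^sub>R (A - c *\<^sub>R mat 1)) = exp (- c * t) *\<^sub>R mexp (t *\<^sub>R A)"
proof -
  have "t *\<^sub>R (A - c *\<^sub>R mat 1) = t *\<^sub>R A + (- c * t) *\<^sub>R mat 1"
    by (simp add: algebra_simps)
  then show ?thesis by (simp only: mexp_add_scalar)
qed

lemma bounded_linear_transpose: "bounded_linear (transpose :: real^'a^'b \<Rightarrow> real^'b^'a)"
  unfolding linear_conv_bounded_linear[symmetric]
  by (rule linearI) (simp_all add: transpose_def vec_eq_iff)

lemma transpose_matpow: "transpose (matpow A k) = matpow (transpose A) k"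
  by (induction k) (simp_all add: matpow_0 matpow_Suc matrix_transpose_mul flip: matpow_Suc_right)

lemma mexp_transpose: "transpose (mexp A) = mexp (transpose A)"
proof -
  from bounded_linear.sums[OF bounded_linear_transpose sums_mexp[of A]]
  have "(\<lambda>n. (1 / fact n) *\<^sub>R matpow (transpose A) n) sums transpose (mexp A)"
    by (simp add: transpose_scalar transpose_matpow)
  with sums_mexp[of "transpose A"] show ?thesis by (simp add: sums_unique2)
qed

section \<open>Matrix calculus\<close>

lemma bounded_bilinear_matrix_matrix_mult:
  "bounded_bilinear ((**) :: real^'a^'b \<Rightarrow> real^'c^'a \<Rightarrow> real^'c^'b)"
  by (rule bilinear_conv_bounded_bilinear[THEN iffD1])
     (auto simp: bilinear_def matrix_add_ldistrib matrix_add_rdistrib matrix_scalar_ac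
        scalar_matrix_assoc[symmetric] intro!: linearI)

lemma bounded_bilinear_matrix_vector_mult:
  "bounded_bilinear ((*v) :: real^'a^'b \<Rightarrow> real^'a \<Rightarrow> real^'b)"
  by (rule bilinear_conv_bounded_bilinear[THEN iffD1])
     (auto simp: bilinear_def matrix_vector_right_distrib matrix_vector_mult_add_rdistrib
        matrix_scaleR_vector_ac scaleR_matrix_vector_assoc[symmetric] intro!: linearI)

lemma bounded_bilinear_outer: "bounded_bilinear (outer :: real^'a \<Rightarrow> real^'b \<Rightarrow> real^'b^'a)"
  by (rule bilinear_conv_bounded_bilinear[THEN iffD1])
     (auto simp: bilinear_def outer_def vec_eq_iff algebra_simps intro!: linearI)

lemma continuous_on_matrix_matrix_mult [continuous_intros]:
  "continuous_on S f \<Longrightarrow> continuous_on S g \<Longrightarrow>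
    continuous_on S (\<lambda>x. (f x :: real^'a^'b) ** (g x :: real^'c^'a))"
  by (rule bounded_bilinear.continuous_on[OF bounded_bilinear_matrix_matrix_mult])

lemma continuous_on_matrix_vector_mult [continuous_intros]:
  "continuous_on S f \<Longrightarrow> continuous_on S g \<Longrightarrow> continuous_on S (\<lambda>x. (f x :: real^'a^'b) *v g x)"
  by (rule bounded_bilinear.continuous_on[OF bounded_bilinear_matrix_vector_mult])

lemma continuous_on_outer [continuous_intros]:
  "continuous_on S f \<Longrightarrow> continuous_on S g \<Longrightarrow>
    continuous_on S (\<lambda>x. outer (f x :: real^'a) (g x :: real^'b))"
  by (rule bounded_bilinear.continuous_on[OF bounded_bilinear_outer])

lemma continuous_on_mexp [continuous_intros]: "continuous_on S (\<lambda>t. mexp (t *\<^sub>R A))"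
  by (rule continuous_on_vector_derivative, rule has_vector_derivative_mexp)

lemma integral_matrix_mult_left:
  "f integrable_on S \<Longrightarrow> integral S (\<lambda>x. (M::real^'a^'b) ** (f x :: real^'c^'a)) = M ** integral S f"
  using integral_linear[OF _ bounded_bilinear.bounded_linear_right[OF bounded_bilinear_matrix_matrix_mult],
      of f S M]
  by (simp add: o_def)

lemma integral_matrix_vector_mult_right:
  "f integrable_on S \<Longrightarrow> integral S (\<lambda>x. (f x :: real^'a^'b) *v v) = integral S f *v v"
  using integral_linear[OF _ bounded_bilinear.bounded_linear_left[OF bounded_bilinear_matrix_vector_mult],
      of f S v]
  by (simp add: o_def)

lemma integral_transpose:
  "f integrable_on S \<Longrightarrow> integral S (\<lambda>x. transpose (f x :: real^'a^'b)) = transpose (integral S f)"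
  using integral_linear[OF _ bounded_linear_transpose, of f S] by (simp add: o_def)

lemma integral_eq_diff_of_derivative:
  fixes f :: "real \<Rightarrow> 'v::banach"
  assumes "0 \<le> t" "\<And>s. s \<in> {0..t} \<Longrightarrow> (f has_vector_derivative f' s) (at s within {0..t})"
  shows "integral {0..t} f' = f t - f 0"
  using fundamental_theorem_of_calculus[OF assms] by (rule integral_unique)

lemma continuous_on_indefinite_integral [continuous_intros]:
  fixes g :: "real \<Rightarrow> 'v::banach"
  assumes g: "continuous_on UNIV g"
  shows "continuous_on S (\<lambda>t. integral {0..t} g)"
proof (rule continuous_on_subset[OF continuous_at_imp_continuous_on subset_UNIV], intro ballI)
  fix x :: real
  define b where "b = \<bar>x\<bar> + 1"
  have b: "0 < b" "x < b" unfolding b_def by auto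
  have "continuous_on {0..b} (\<lambda>s. integral {0..s} g)"
    by (intro indefinite_integral_continuous_1 integrable_continuous_real continuous_on_subset[OF g]) auto
  then have "continuous_on {..<b} (\<lambda>t. integral {0..max 0 t} g)"
    by (rule continuous_on_compose2) (use b in \<open>auto intro!: continuous_intros\<close>)
  moreover have "integral {0..max 0 t} g = integral {0..t} g" for t
    by (cases "t < 0") (auto simp: max_def)
  ultimately have "continuous_on {..<b} (\<lambda>t. integral {0..t} g)" by simp
  then show "isCont (\<lambda>t. integral {0..t} g) x"
    using b by (meson continuous_on_eq_continuous_at lessThan_iff open_lessThan)
qed

lemma matrix_mult_integral_mexp:
  assumes "0 \<le> t"
  shows "A ** integral {0..t} (\<lambda>s. mexp (s *\<^sub>R A)) = mexp (t *\<^sub>R A) - mat 1"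
proof -
  have "A ** integral {0..t} (\<lambda>s. mexp (s *\<^sub>R A)) = integral {0..t} (\<lambda>s. A ** mexp (s *\<^sub>R A))"
    by (rule integral_matrix_mult_left[symmetric]) (intro integrable_continuous_real continuous_intros)
  also have "\<dots> = mexp (t *\<^sub>R A) - mexp (0 *\<^sub>R A)"
    by (rule integral_eq_diff_of_derivative[OF assms has_vector_derivative_mexp])
  finally show ?thesis by simp
qed

text \<open>\<open>mexp (- t M) z t\<close> has derivative zero.\<close>

lemma linear_ode_solution_eq_mexp:
  fixes M :: "real^'a^'a" and z :: "real \<Rightarrow> real^'a"
  assumes T: "0 \<le> T"
    and z': "\<And>t. t \<in> {0..T} \<Longrightarrow> (z has_vector_derivative M *v z t) (at t within {0..T})"
  shows "z T = mexp (T *\<^sub>R M) *v z 0"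
proof -
  define N where "N = - M"
  define h where "h t = mexp (t *\<^sub>R N) *v z t" for t
  have "(h has_vector_derivative 0) (at t within {0..T})" if t: "t \<in> {0..T}" for t
  proof -
    have "(h has_vector_derivative
        mexp (t *\<^sub>R N) *v (M *v z t) + (N ** mexp (t *\<^sub>R N)) *v z t) (at t within {0..T})"
      unfolding h_def
      by (rule bounded_bilinear.has_vector_derivative[OF bounded_bilinear_matrix_vector_mult
            has_vector_derivative_mexp z'[OF t]])
    moreover have "mexp (t *\<^sub>R N) *v (M *v z t) + (N ** mexp (t *\<^sub>R N)) *v z t
        = mexp (t *\<^sub>R N) *v ((M + N) *v z t)"
      by (simp add: mexp_commute matrix_vector_mul_assoc[symmetric] matrix_vector_right_distrib
          matrix_vector_mult_add_rdistrib)
    ultimately show ?thesis by (simp add: N_def)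
  qed
  then have "h T = h 0"
    using integral_eq_diff_of_derivative[OF T, of h "\<lambda>_. 0"] by simp
  then have "mexp (T *\<^sub>R M) *v (mexp (- (T *\<^sub>R M)) *v z T) = mexp (T *\<^sub>R M) *v z 0"
    by (simp add: h_def N_def)
  then show ?thesis by (simp add: matrix_vector_mul_assoc mexp_mult_mexp_uminus)
qed

lemma integral_exp_neg:
  fixes mu D :: real
  assumes "mu \<noteq> 0" "0 \<le> D"
  shows "integral {0..D} (\<lambda>t. exp (- mu * t)) = (1 - exp (- mu * D)) / mu"
proof -
  have "integral {0..D} (\<lambda>t. exp (- mu * t)) = - exp (- mu * D) / mu - - exp (- mu * 0) / mu"
    by (rule integral_eq_diff_of_derivative[OF assms(2)])
      (use assms(1) in \<open>auto intro!: derivative_eq_intros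
        simp flip: has_real_derivative_iff_has_vector_derivative\<close>)
  then show ?thesis by (simp add: diff_divide_distrib)
qed

lemma integral_exp_neg_by_parts:
  fixes H H' :: "real \<Rightarrow> 'v::banach"
  assumes D: "0 \<le> D" and H0: "H 0 = 0"
    and H': "\<And>t. t \<in> {0..D} \<Longrightarrow> (H has_vector_derivative H' t) (at t within {0..D})"
    and H'_cont: "continuous_on {0..D} H'"
  shows "mu *\<^sub>R integral {0..D} (\<lambda>t. exp (- mu * t) *\<^sub>R H t) =
         integral {0..D} (\<lambda>t. exp (- mu * t) *\<^sub>R H' t) - exp (- mu * D) *\<^sub>R H D"
proof -
  have H_cont: "continuous_on {0..D} H" by (rule continuous_on_vector_derivative[OF H'])
  have "integral {0..D} (\<lambda>t. exp (- mu * t) *\<^sub>R H' t + (- mu) *\<^sub>R (exp (- mu * t) *\<^sub>R H t))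
        = exp (- mu * D) *\<^sub>R H D - exp (- mu * 0) *\<^sub>R H 0"
  proof (rule integral_eq_diff_of_derivative[OF D])
    fix s assume s: "s \<in> {0..D}"
    have "((\<lambda>s. exp (- mu * s)) has_real_derivative - mu * exp (- mu * s)) (at s within {0..D})"
      by (auto intro!: derivative_eq_intros)
    from has_vector_derivative_scaleR[OF this H'[OF s]]
    show "((\<lambda>t. exp (- mu * t) *\<^sub>R H t) has_vector_derivative
        exp (- mu * s) *\<^sub>R H' s + (- mu) *\<^sub>R (exp (- mu * s) *\<^sub>R H s)) (at s within {0..D})"
      by simp
  qed
  moreover have "integral {0..D} (\<lambda>t. exp (- mu * t) *\<^sub>R H' t + (- mu) *\<^sub>R (exp (- mu * t) *\<^sub>R H t))
      = integral {0..D} (\<lambda>t. exp (- mu * t) *\<^sub>R H' t) + (- mu) *\<^sub>R integral {0..D} (\<lambda>t. exp (- mu * t) *\<^sub>R H t)"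
    by (intro integral_add integrable_cmul integrable_continuous_real continuous_intros H_cont H'_cont
        trans[OF integral_add] arg_cong2[where f="(+)"] refl integral_cmul)
  ultimately show ?thesis using H0 by (simp add: algebra_simps)
qed

section \<open>The augmented matrices\<close>

definition extend_vec :: "real^'a \<Rightarrow> real^'a option" where
  "extend_vec v = (\<chi> j. case j of Some i \<Rightarrow> v $ i | None \<Rightarrow> 0)"

lemma extend_vec_Some [simp]: "extend_vec v $ Some i = v $ i"
  and extend_vec_None [simp]: "extend_vec v $ None = 0"
  and extend_vec_zero [simp]: "extend_vec 0 = 0"
  by (simp_all add: extend_vec_def vec_eq_iff split: option.splits)

lemma bounded_linear_extend_vec: "bounded_linear extend_vec"
  unfolding linear_conv_bounded_linear[symmetric]
  by (rule linearI) (simp_all add: extend_vec_def vec_eq_iff split: option.splits)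

lemma sum_UNIV_option: "(\<Sum>j\<in>(UNIV::'a::finite option set). f j) = f None + (\<Sum>i\<in>UNIV. f (Some i))"
  by (simp add: UNIV_option_conv sum.reindex)

lemma Ab_mat_mult_vec:
  "(Ab_mat A mu xa *v x) $ Some i = ((A - mu *\<^sub>R mat 1) *v (\<chi> j. x $ Some j)) $ i + x $ None * xa $ i"
  "(Ab_mat A mu xa *v x) $ None = 0"
  by (simp_all add: Ab_mat_def matrix_vector_mult_def sum_UNIV_option)

lemma Abu_mat_mult_vec:
  "(Abu_mat A mu u *v x) $ Some (Some i) =
     ((A - mu *\<^sub>R mat 1) *v (\<chi> j. x $ Some (Some j))) $ i + x $ Some None * u $ i"
  "(Abu_mat A mu u *v x) $ Some None = x $ None - mu * x $ Some None"
  "(Abu_mat A mu u *v x) $ None = 0"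
  by (simp_all add: Abu_mat_def matrix_vector_mult_def sum_UNIV_option)

lemma Ab_mat_mult_extend_vec:
  fixes A :: "real^'n^'n"
  shows "Ab_mat A mu xa *v (extend_vec g + axis None 1) = extend_vec ((A - mu *\<^sub>R mat 1) *v g + xa)"
  unfolding vec_eq_iff
proof
  fix i :: "'n option"
  show "(Ab_mat A mu xa *v (extend_vec g + axis None 1)) $ i = extend_vec ((A - mu *\<^sub>R mat 1) *v g + xa) $ i"
    by (cases i) (simp_all add: Ab_mat_mult_vec axis_def)
qed

lemma Abu_mat_mult_extend_vec:
  fixes A :: "real^'n^'n"
  shows "Abu_mat A mu u *v (extend_vec (extend_vec g) + p *\<^sub>R axis (Some None) 1 + axis None 1)
    = extend_vec (extend_vec ((A - mu *\<^sub>R mat 1) *v g + p *\<^sub>R u)) + (1 - mu * p) *\<^sub>R axis (Some None) 1"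
  unfolding vec_eq_iff
proof
  fix i :: "'n option option"
  show "(Abu_mat A mu u *v (extend_vec (extend_vec g) + p *\<^sub>R axis (Some None) 1 + axis None 1)) $ i
    = (extend_vec (extend_vec ((A - mu *\<^sub>R mat 1) *v g + p *\<^sub>R u)) + (1 - mu * p) *\<^sub>R axis (Some None) 1) $ i"
  proof (cases i)
    case (Some j)
    then show ?thesis by (cases j) (simp_all add: Abu_mat_mult_vec axis_def)
  qed (simp add: Abu_mat_mult_vec axis_def)
qed

text \<open>The last column of \<open>mexp (T Ab)\<close> is the value at \<open>T\<close> of the solution
  \<open>(\<integral>\<^sub>0\<^sup>t exp (s B) xa ds, 1)\<close> of \<open>w' = Ab w\<close>, where \<open>B = A - mu I\<close>.\<close>

lemma mexp_Ab_mat_last_column: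
  fixes A :: "real^'n^'n"
  assumes T: "0 \<le> T"
  shows "(\<chi> i. mexp (T *\<^sub>R Ab_mat A mu xa) $ Some i $ None) =
         integral {0..T} (\<lambda>s. mexp (s *\<^sub>R (A - mu *\<^sub>R mat 1)) *v xa)"
proof -
  define B where "B = A - mu *\<^sub>R mat 1"
  define G where "G t = integral {0..t} (\<lambda>s. mexp (s *\<^sub>R B) *v xa)" for t
  define w where "w t = extend_vec (G t) + axis None 1" for t
  have "(w has_vector_derivative Ab_mat A mu xa *v w t) (at t within {0..T})" if t: "t \<in> {0..T}" for t
  proof -
    have "(G has_vector_derivative mexp (t *\<^sub>R B) *v xa) (at t within {0..T})"
      unfolding G_def by (rule integral_has_vector_derivative[OF _ t]) (auto intro!: continuous_intros)
    from bounded_linear.has_vector_derivative[OF bounded_linear_extend_vec this]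
    have "(w has_vector_derivative extend_vec (mexp (t *\<^sub>R B) *v xa)) (at t within {0..T})"
      unfolding w_def has_vector_derivative_add_const .
    moreover have "B *v G t + xa = mexp (t *\<^sub>R B) *v xa"
      using matrix_mult_integral_mexp[of t B] t
      by (simp add: G_def integral_matrix_vector_mult_right integrable_continuous_real continuous_on_mexp
          matrix_vector_mul_assoc matrix_vector_mult_diff_rdistrib)
    ultimately show ?thesis unfolding w_def Ab_mat_mult_extend_vec B_def[symmetric] by simp
  qed
  then have "w T = mexp (T *\<^sub>R Ab_mat A mu xa) *v w 0" by (rule linear_ode_solution_eq_mexp[OF T])
  moreover have "w 0 = axis None 1" by (simp add: w_def G_def vec_eq_iff split: option.splits)
  ultimately have "(\<chi> i. mexp (T *\<^sub>R Ab_mat A mu xa) $ Some i $ None) = (\<chi> i. w T $ Some i)"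
    by (simp add: matrix_vector_mult_basis column_def)
  also have "\<dots> = G T" by (simp add: w_def axis_def)
  finally show ?thesis by (simp add: G_def B_def)
qed

text \<open>\<open>G t = \<integral>\<^sub>0\<^sup>t exp (- mu s) F s u ds\<close>, with \<open>F s = \<integral>\<^sub>0\<^sup>s exp (\<tau> A) d\<tau>\<close>, solves
  \<open>G' = (A - mu I) G + (1 - exp (- mu t)) / mu u\<close>: differentiate both sides and use
  \<open>A F s = exp (s A) - I\<close>.\<close>

lemma exp_neg_mexp_integral_ode:
  fixes A :: "real^'n^'n" and u :: "real^'n"
  assumes mu: "mu \<noteq> 0" and t: "0 \<le> t"
  defines "h \<equiv> \<lambda>s. exp (- mu * s) *\<^sub>R (integral {0..s} (\<lambda>\<tau>. mexp (\<tau> *\<^sub>R A)) *v u)"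
  shows "h t = (A - mu *\<^sub>R mat 1) *v integral {0..t} h + ((1 - exp (- mu * t)) / mu) *\<^sub>R u"
proof -
  define B where "B = A - mu *\<^sub>R mat 1"
  define F where "F s = integral {0..s} (\<lambda>\<tau>. mexp (\<tau> *\<^sub>R A))" for s
  define P where "P s = h s - B *v integral {0..s} h - ((1 - exp (- mu * s)) / mu) *\<^sub>R u" for s
  have h_cont: "continuous_on {0..t} h" unfolding h_def by (intro continuous_intros)
  have "(P has_vector_derivative 0) (at s within {0..t})" if s: "s \<in> {0..t}" for s
  proof -
    have "(F has_vector_derivative mexp (s *\<^sub>R A)) (at s within {0..t})"
      unfolding F_def by (rule integral_has_vector_derivative[OF _ s]) (intro continuous_intros)
    from bounded_bilinear.has_vector_derivative[OF bounded_bilinear_matrix_vector_mult this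
        has_vector_derivative_const]
    have "((\<lambda>s. F s *v u) has_vector_derivative mexp (s *\<^sub>R A) *v u) (at s within {0..t})" by simp
    then have "(h has_vector_derivative
        exp (- mu * s) *\<^sub>R (mexp (s *\<^sub>R A) *v u) + (- mu * exp (- mu * s)) *\<^sub>R (F s *v u)) (at s within {0..t})"
      unfolding h_def F_def[symmetric]
      by (rule has_vector_derivative_scaleR[rotated]) (auto intro!: derivative_eq_intros)
    moreover have "((\<lambda>s. B *v integral {0..s} h) has_vector_derivative B *v h s) (at s within {0..t})"
      by (rule bounded_linear.has_vector_derivative[OF matrix_vector_mul_bounded_linear
            integral_has_vector_derivative[OF h_cont s]])
    moreover have "((\<lambda>s. ((1 - exp (- mu * s)) / mu) *\<^sub>R u) has_vector_derivative
        exp (- mu * s) *\<^sub>R u) (at s within {0..t})"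
      using mu by (auto intro!: derivative_eq_intros has_vector_derivative_scaleR[rotated, where f'=0, simplified])
    ultimately have "(P has_vector_derivative
        exp (- mu * s) *\<^sub>R (mexp (s *\<^sub>R A) *v u) + (- mu * exp (- mu * s)) *\<^sub>R (F s *v u)
        - B *v h s - exp (- mu * s) *\<^sub>R u) (at s within {0..t})"
      unfolding P_def by (intro has_vector_derivative_diff)
    moreover have "B *v h s = exp (- mu * s) *\<^sub>R ((A ** F s) *v u - mu *\<^sub>R (F s *v u))"
      by (simp add: B_def h_def F_def matrix_vector_mult_diff_rdistrib matrix_vector_mul_assoc[symmetric]
          matrix_scaleR_vector_ac scaleR_matrix_vector_assoc[symmetric])
    moreover have "A ** F s = mexp (s *\<^sub>R A) - mat 1"
      unfolding F_def by (rule matrix_mult_integral_mexp) (use s in auto)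
    ultimately show ?thesis by (simp add: algebra_simps matrix_vector_mult_diff_rdistrib)
  qed
  then have "P t = P 0"
    using integral_eq_diff_of_derivative[OF t, of P "\<lambda>_. 0"] by simp
  then show ?thesis by (simp add: P_def B_def h_def algebra_simps)
qed

text \<open>Same argument for \<open>Abu\<close>, with the solution \<open>(G t, (1 - exp (- mu t)) / mu, 1)\<close>.\<close>

lemma mexp_Abu_mat_last_column:
  fixes A :: "real^'n^'n"
  assumes mu: "mu \<noteq> 0" and T: "0 \<le> T"
  shows "(\<chi> i. mexp (T *\<^sub>R Abu_mat A mu u) $ Some (Some i) $ None) =
         integral {0..T} (\<lambda>s. exp (- mu * s) *\<^sub>R (integral {0..s} (\<lambda>\<tau>. mexp (\<tau> *\<^sub>R A)) *v u))"
proof -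
  define h where "h = (\<lambda>s. exp (- mu * s) *\<^sub>R (integral {0..s} (\<lambda>\<tau>. mexp (\<tau> *\<^sub>R A)) *v u))"
  define G where "G t = integral {0..t} h" for t
  define phi where "phi t = (1 - exp (- mu * t)) / mu" for t
  define w where "w t = extend_vec (extend_vec (G t)) + phi t *\<^sub>R axis (Some None) 1 + axis None 1" for t
  have "(w has_vector_derivative Abu_mat A mu u *v w t) (at t within {0..T})" if t: "t \<in> {0..T}" for t
  proof -
    have "(G has_vector_derivative h t) (at t within {0..T})"
      unfolding G_def h_def by (rule integral_has_vector_derivative[OF _ t]) (intro continuous_intros)
    from bounded_linear.has_vector_derivative[OF bounded_linear_compose[OF bounded_linear_extend_vec
          bounded_linear_extend_vec] this]
    have "((\<lambda>t. extend_vec (extend_vec (G t))) has_vector_derivative extend_vec (extend_vec (h t)))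
        (at t within {0..T})" by simp
    moreover have "((\<lambda>t. phi t *\<^sub>R axis (Some None) 1) has_vector_derivative
        exp (- mu * t) *\<^sub>R axis (Some None) 1) (at t within {0..T})"
      unfolding phi_def using mu
      by (auto intro!: derivative_eq_intros has_vector_derivative_scaleR[rotated, where f'=0, simplified])
    ultimately have "(w has_vector_derivative
        extend_vec (extend_vec (h t)) + exp (- mu * t) *\<^sub>R axis (Some None) 1) (at t within {0..T})"
      unfolding w_def has_vector_derivative_add_const by (rule has_vector_derivative_add)
    moreover have "h t = (A - mu *\<^sub>R mat 1) *v G t + phi t *\<^sub>R u"
      using exp_neg_mexp_integral_ode[OF mu, of t A u] t by (simp add: G_def h_def phi_def)
    moreover have "exp (- mu * t) = 1 - mu * phi t" using mu by (simp add: phi_def)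
    ultimately show ?thesis unfolding w_def Abu_mat_mult_extend_vec by simp
  qed
  then have "w T = mexp (T *\<^sub>R Abu_mat A mu u) *v w 0" by (rule linear_ode_solution_eq_mexp[OF T])
  moreover have "w 0 = axis None 1"
    by (simp add: w_def G_def phi_def vec_eq_iff split: option.splits)
  ultimately have "(\<chi> i. mexp (T *\<^sub>R Abu_mat A mu u) $ Some (Some i) $ None) = (\<chi> i. w T $ Some (Some i))"
    by (simp add: matrix_vector_mult_basis column_def)
  also have "\<dots> = G T" by (simp add: w_def vec_eq_iff axis_def)
  finally show ?thesis by (simp add: G_def h_def)
qed

section \<open>Exponentially weighted integrals\<close>

lemma transpose_mexp_scaleR: "transpose (mexp (t *\<^sub>R A)) = mexp (t *\<^sub>R transpose A)"
  by (simp add: mexp_transpose transpose_scalar)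

lemma transpose_integral_mexp:
  "transpose (integral {0..t} (\<lambda>\<tau>. mexp (\<tau> *\<^sub>R A))) = integral {0..t} (\<lambda>\<tau>. mexp (\<tau> *\<^sub>R transpose A))"
  by (subst integral_transpose[symmetric])
     (auto intro!: integrable_continuous_real continuous_intros simp: transpose_mexp_scaleR)

lemma outer_matrix_vector_mult:
  "outer ((M::real^'a^'b) *v x) ((N::real^'c^'d) *v y) = M ** outer x y ** transpose N"
  by (simp add: outer_def matrix_matrix_mult_def matrix_vector_mult_def transpose_def vec_eq_iff
      sum_distrib_left sum_distrib_right ac_simps)

lemma transpose_outer: "transpose (outer a b) = outer b a"
  by (simp add: outer_def transpose_def vec_eq_iff)

lemma outer_add_left: "outer (a + b) c = outer a c + outer b c"
  and outer_add_right: "outer c (a + b) = outer c a + outer c b"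
  and outer_diff_left: "outer (a - b) c = outer a c - outer b c"
  and outer_diff_right: "outer c (a - b) = outer c a - outer c b"
  by (simp_all add: outer_def vec_eq_iff algebra_simps)

lemma outer_zero_left [simp]: "outer 0 b = 0"
  by (simp add: outer_def vec_eq_iff)

lemma exp_scaleR_mexp_sandwich:
  "exp (- mu * t) *\<^sub>R (mexp (t *\<^sub>R A) ** X ** mexp (t *\<^sub>R transpose A)) =
   mexp (t *\<^sub>R (A - (mu / 2) *\<^sub>R mat 1)) ** X ** mexp (t *\<^sub>R transpose (A - (mu / 2) *\<^sub>R mat 1))"
proof -
  have "transpose (A - (mu / 2) *\<^sub>R mat 1) = transpose A - (mu / 2) *\<^sub>R mat 1"
    by (simp add: transpose_def vec_eq_iff mat_def)
  moreover have "exp (- (mu / 2) * t) * exp (- (mu / 2) * t) = exp (- mu * t)"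
    by (simp flip: exp_add)
  ultimately show ?thesis
    by (simp add: mexp_shift matrix_scalar_ac scalar_matrix_assoc[symmetric])
qed

lemma exp_scaleR_outer_mexp_integral:
  "exp (- mu * t) *\<^sub>R outer (mexp (t *\<^sub>R A) *v v) (integral {0..t} (\<lambda>\<tau>. mexp (\<tau> *\<^sub>R A)) *v u) =
   mexp (t *\<^sub>R (A - mu *\<^sub>R mat 1)) ** outer v u ** integral {0..t} (\<lambda>\<tau>. mexp (\<tau> *\<^sub>R transpose A))"
  by (simp add: outer_matrix_vector_mult transpose_integral_mexp mexp_shift scalar_matrix_assoc)

lemma integral_exp_neg_mean:
  fixes A :: "real^'n^'n"
  assumes mu: "mu \<noteq> 0" and D: "0 \<le> D"
  shows "integral {0..D} (\<lambda>t. exp (- mu * t) *\<^sub>R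
            (mexp (t *\<^sub>R A) *v xa + integral {0..t} (\<lambda>\<tau>. mexp (\<tau> *\<^sub>R A)) *v u))
    = (\<chi> i. mexp (D *\<^sub>R Ab_mat A mu xa) $ Some i $ None)
      + (\<chi> i. mexp (D *\<^sub>R Abu_mat A mu u) $ Some (Some i) $ None)"
proof -
  have "exp (- mu * t) *\<^sub>R (mexp (t *\<^sub>R A) *v xa + integral {0..t} (\<lambda>\<tau>. mexp (\<tau> *\<^sub>R A)) *v u)
      = mexp (t *\<^sub>R (A - mu *\<^sub>R mat 1)) *v xa
        + exp (- mu * t) *\<^sub>R (integral {0..t} (\<lambda>\<tau>. mexp (\<tau> *\<^sub>R A)) *v u)" for t
    by (simp add: mexp_shift scaleR_right_distrib scaleR_matrix_vector_assoc)
  then show ?thesis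
    by (simp add: mexp_Ab_mat_last_column[OF D] mexp_Abu_mat_last_column[OF mu D] integral_add
        integrable_continuous_real continuous_intros)
qed

lemma integral_exp_neg_covariance:
  fixes A P G :: "real^'n^'n" and mu D :: real
  assumes D: "0 \<le> D"
  defines "W \<equiv> \<lambda>\<tau>. mexp (\<tau> *\<^sub>R A) ** G ** mexp (\<tau> *\<^sub>R transpose A)"
    and "Am \<equiv> A - (mu / 2) *\<^sub>R mat 1"
  shows "mu *\<^sub>R integral {0..D} (\<lambda>t. exp (- mu * t) *\<^sub>R
            (mexp (t *\<^sub>R A) ** P ** mexp (t *\<^sub>R transpose A) + integral {0..t} W))
    = integral {0..D} (\<lambda>t. mexp (t *\<^sub>R Am) ** (G + mu *\<^sub>R P) ** mexp (t *\<^sub>R transpose Am))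
      - exp (- mu * D) *\<^sub>R integral {0..D} W"
proof -
  define V where "V t = mexp (t *\<^sub>R A) ** P ** mexp (t *\<^sub>R transpose A)" for t
  have W_cont: "continuous_on UNIV W" unfolding W_def by (intro continuous_intros)
  have V_cont: "continuous_on UNIV V" unfolding V_def by (intro continuous_intros)
  have by_parts: "mu *\<^sub>R integral {0..D} (\<lambda>t. exp (- mu * t) *\<^sub>R integral {0..t} W)
      = integral {0..D} (\<lambda>t. exp (- mu * t) *\<^sub>R W t) - exp (- mu * D) *\<^sub>R integral {0..D} W"
    by (rule integral_exp_neg_by_parts[OF D])
      (auto intro!: integral_has_vector_derivative continuous_on_subset[OF W_cont])
  have "mexp (t *\<^sub>R Am) ** (G + mu *\<^sub>R P) ** mexp (t *\<^sub>R transpose Am)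
      = exp (- mu * t) *\<^sub>R W t + mu *\<^sub>R (exp (- mu * t) *\<^sub>R V t)" for t
    unfolding Am_def exp_scaleR_mexp_sandwich[symmetric] W_def V_def
    by (simp add: matrix_add_ldistrib matrix_add_rdistrib matrix_scalar_ac scalar_matrix_assoc[symmetric]
        algebra_simps)
  moreover have "(\<lambda>t. exp (- mu * t) *\<^sub>R W t) integrable_on {0..D}"
    "(\<lambda>t. exp (- mu * t) *\<^sub>R V t) integrable_on {0..D}"
    by (intro integrable_continuous_real continuous_intros continuous_on_subset[OF W_cont]
        continuous_on_subset[OF V_cont] subset_UNIV)+
  ultimately have "integral {0..D} (\<lambda>t. mexp (t *\<^sub>R Am) ** (G + mu *\<^sub>R P) ** mexp (t *\<^sub>R transpose Am))
      = integral {0..D} (\<lambda>t. exp (- mu * t) *\<^sub>R W t) + mu *\<^sub>R integral {0..D} (\<lambda>t. exp (- mu * t) *\<^sub>R V t)"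
    by (simp only: integral_add integrable_cmul integral_cmul)
  moreover have "integral {0..D} (\<lambda>t. exp (- mu * t) *\<^sub>R (V t + integral {0..t} W))
      = integral {0..D} (\<lambda>t. exp (- mu * t) *\<^sub>R V t) + integral {0..D} (\<lambda>t. exp (- mu * t) *\<^sub>R integral {0..t} W)"
    by (simp add: scaleR_add_right integral_add integrable_continuous_real continuous_intros W_cont
        continuous_on_subset[OF V_cont])
  ultimately show ?thesis
    using by_parts by (simp add: V_def scaleR_add_right algebra_simps)
qed

lemma integral_exp_neg_outer_mexp_integral:
  fixes A :: "real^'n^'n" and u :: "real^'n" and mu D :: real
  assumes D: "0 \<le> D"
  defines "F \<equiv> \<lambda>t. integral {0..t} (\<lambda>\<tau>. mexp (\<tau> *\<^sub>R A))"
    and "F' \<equiv> \<lambda>t. integral {0..t} (\<lambda>\<tau>. mexp (\<tau> *\<^sub>R transpose A))"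
  defines "Y \<equiv> integral {0..D} (\<lambda>t. mexp (t *\<^sub>R (A - mu *\<^sub>R mat 1)) ** outer u u ** F' t)"
  shows "mu *\<^sub>R integral {0..D} (\<lambda>t. exp (- mu * t) *\<^sub>R outer (F t *v u) (F t *v u))
    = Y + transpose Y - exp (- mu * D) *\<^sub>R (F D ** outer u u ** F' D)"
proof -
  define Z where "Z t = mexp (t *\<^sub>R (A - mu *\<^sub>R mat 1)) ** outer u u ** F' t" for t
  have Z_int: "Z integrable_on {0..D}"
    unfolding Z_def F'_def by (intro integrable_continuous_real continuous_intros)
  have H': "((\<lambda>t. outer (F t *v u) (F t *v u)) has_vector_derivative
      outer (mexp (t *\<^sub>R A) *v u) (F t *v u) + outer (F t *v u) (mexp (t *\<^sub>R A) *v u)) (at t within {0..D})"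
    if "t \<in> {0..D}" for t
  proof -
    have "(F has_vector_derivative mexp (t *\<^sub>R A)) (at t within {0..D})"
      unfolding F_def by (rule integral_has_vector_derivative[OF _ that]) (intro continuous_intros)
    from bounded_bilinear.has_vector_derivative[OF bounded_bilinear_matrix_vector_mult this
        has_vector_derivative_const]
    have "((\<lambda>t. F t *v u) has_vector_derivative mexp (t *\<^sub>R A) *v u) (at t within {0..D})" by simp
    from bounded_bilinear.has_vector_derivative[OF bounded_bilinear_outer this this]
    show ?thesis by (simp add: add.commute)
  qed
  have "mu *\<^sub>R integral {0..D} (\<lambda>t. exp (- mu * t) *\<^sub>R outer (F t *v u) (F t *v u))
      = integral {0..D} (\<lambda>t. exp (- mu * t) *\<^sub>R
          (outer (mexp (t *\<^sub>R A) *v u) (F t *v u) + outer (F t *v u) (mexp (t *\<^sub>R A) *v u)))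
        - exp (- mu * D) *\<^sub>R outer (F D *v u) (F D *v u)"
    by (rule integral_exp_neg_by_parts[OF D _ H']) (auto simp: F_def intro!: continuous_intros)
  also have "(\<lambda>t. exp (- mu * t) *\<^sub>R
      (outer (mexp (t *\<^sub>R A) *v u) (F t *v u) + outer (F t *v u) (mexp (t *\<^sub>R A) *v u)))
      = (\<lambda>t. Z t + transpose (Z t))"
  proof
    fix t
    have Z: "exp (- mu * t) *\<^sub>R outer (mexp (t *\<^sub>R A) *v u) (F t *v u) = Z t"
      unfolding Z_def F_def F'_def by (rule exp_scaleR_outer_mexp_integral)
    show "exp (- mu * t) *\<^sub>R
        (outer (mexp (t *\<^sub>R A) *v u) (F t *v u) + outer (F t *v u) (mexp (t *\<^sub>R A) *v u))
        = Z t + transpose (Z t)"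
      by (simp only: Z[symmetric] scaleR_add_right transpose_scalar transpose_outer)
  qed
  also have "integral {0..D} (\<lambda>t. Z t + transpose (Z t)) = Y + transpose Y"
    using Z_int by (simp add: integral_add integrable_linear[OF _ bounded_linear_transpose, unfolded o_def]
        integral_transpose Y_def Z_def[abs_def])
  also have "outer (F D *v u) (F D *v u) = F D ** outer u u ** F' D"
    by (simp add: outer_matrix_vector_mult F_def F'_def transpose_integral_mexp)
  finally show ?thesis .
qed

lemma integral_exp_neg_outer_mean:
  fixes A :: "real^'n^'n" and xa u :: "real^'n" and mu D :: real
  assumes D: "0 \<le> D"
  defines "m \<equiv> \<lambda>t. mexp (t *\<^sub>R A) *v xa + integral {0..t} (\<lambda>\<tau>. mexp (\<tau> *\<^sub>R A)) *v u"
    and "F' \<equiv> \<lambda>t. integral {0..t} (\<lambda>\<tau>. mexp (\<tau> *\<^sub>R transpose A))"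
    and "Am \<equiv> A - (mu / 2) *\<^sub>R mat 1"
  defines "Y \<equiv> \<lambda>v. integral {0..D} (\<lambda>t. mexp (t *\<^sub>R (A - mu *\<^sub>R mat 1)) ** outer v u ** F' t)"
  shows "mu *\<^sub>R integral {0..D} (\<lambda>t. exp (- mu * t) *\<^sub>R outer (m t) (m t))
    = mu *\<^sub>R (integral {0..D} (\<lambda>t. mexp (t *\<^sub>R Am) ** outer xa xa ** mexp (t *\<^sub>R transpose Am))
        + Y xa + transpose (Y xa))
      + Y u + transpose (Y u)
      - exp (- mu * D) *\<^sub>R (integral {0..D} (\<lambda>\<tau>. mexp (\<tau> *\<^sub>R A)) ** outer u u ** F' D)"
proof -
  define F where "F t = integral {0..t} (\<lambda>\<tau>. mexp (\<tau> *\<^sub>R A))" for t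
  define S where "S t = mexp (t *\<^sub>R Am) ** outer xa xa ** mexp (t *\<^sub>R transpose Am)" for t
  define X where "X t = mexp (t *\<^sub>R (A - mu *\<^sub>R mat 1)) ** outer xa u ** F' t" for t
  define H where "H t = exp (- mu * t) *\<^sub>R outer (F t *v u) (F t *v u)" for t
  have "exp (- mu * t) *\<^sub>R outer (m t) (m t) = S t + X t + transpose (X t) + H t" for t
  proof -
    have "outer (m t) (m t) = outer (mexp (t *\<^sub>R A) *v xa) (mexp (t *\<^sub>R A) *v xa)
        + outer (mexp (t *\<^sub>R A) *v xa) (F t *v u) + transpose (outer (mexp (t *\<^sub>R A) *v xa) (F t *v u))
        + outer (F t *v u) (F t *v u)"
      by (simp add: m_def F_def outer_add_left outer_add_right transpose_outer)
    moreover have S: "exp (- mu * t) *\<^sub>R outer (mexp (t *\<^sub>R A) *v xa) (mexp (t *\<^sub>R A) *v xa) = S t"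
      unfolding S_def Am_def outer_matrix_vector_mult transpose_mexp_scaleR
      by (rule exp_scaleR_mexp_sandwich)
    moreover have X: "exp (- mu * t) *\<^sub>R outer (mexp (t *\<^sub>R A) *v xa) (F t *v u) = X t"
      unfolding X_def F_def F'_def by (rule exp_scaleR_outer_mexp_integral)
    ultimately show ?thesis
      by (simp only: S[symmetric] X[symmetric] H_def scaleR_add_right transpose_scalar)
  qed
  moreover have "S integrable_on {0..D}" "X integrable_on {0..D}" "H integrable_on {0..D}"
    unfolding S_def X_def H_def F_def F'_def by (intro integrable_continuous_real continuous_intros)+
  ultimately have "integral {0..D} (\<lambda>t. exp (- mu * t) *\<^sub>R outer (m t) (m t))
      = integral {0..D} S + integral {0..D} X + transpose (integral {0..D} X) + integral {0..D} H"
    by (simp add: integral_add integrable_add integral_transpose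
        integrable_linear[OF _ bounded_linear_transpose, unfolded o_def])
  moreover have "mu *\<^sub>R integral {0..D} H = Y u + transpose (Y u)
      - exp (- mu * D) *\<^sub>R (integral {0..D} (\<lambda>\<tau>. mexp (\<tau> *\<^sub>R A)) ** outer u u ** F' D)"
    unfolding H_def F_def F'_def Y_def by (rule integral_exp_neg_outer_mexp_integral[OF D])
  ultimately show ?thesis
    by (simp add: S_def[abs_def] X_def[abs_def] Y_def F'_def scaleR_add_right)
qed

section \<open>The truncated exponential lag\<close>

definition trunc_exp_density :: "real \<Rightarrow> real \<Rightarrow> real \<Rightarrow> real" where
  "trunc_exp_density mu D t = mu / (1 - exp (- mu * D)) * exp (- mu * t) * indicator {0..<D} t"

definition trunc_exp_measure :: "real \<Rightarrow> real \<Rightarrow> real measure" where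
  "trunc_exp_measure mu D = density lborel (\<lambda>t. ennreal (trunc_exp_density mu D t))"

lemma borel_measurable_trunc_exp_density [measurable]: "trunc_exp_density mu D \<in> borel_measurable borel"
  unfolding trunc_exp_density_def[abs_def] by measurable

lemma sets_trunc_exp_measure [measurable_cong]: "sets (trunc_exp_measure mu D) = sets borel"
  by (simp add: trunc_exp_measure_def)

lemma AE_trunc_exp_measure: "AE t in trunc_exp_measure mu D. t \<in> {0..<D}"
  unfolding trunc_exp_measure_def
  by (subst AE_density) (auto simp: trunc_exp_density_def indicator_def intro!: AE_I2)

lemma trunc_exp_density_nonneg:
  assumes "0 < mu" "0 < D"
  shows "0 \<le> trunc_exp_density mu D t"
  using assms by (simp add: trunc_exp_density_def)

lemma
  fixes f :: "real \<Rightarrow> 'v::euclidean_space"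
  assumes f: "continuous_on UNIV f"
  shows integrable_trunc_exp_density: "integrable lborel (\<lambda>t. trunc_exp_density mu D t *\<^sub>R f t)"
    and integral_trunc_exp_density: "(\<integral>t. trunc_exp_density mu D t *\<^sub>R f t \<partial>lborel)
      = (mu / (1 - exp (- mu * D))) *\<^sub>R integral {0..D} (\<lambda>t. exp (- mu * t) *\<^sub>R f t)"
proof -
  define k where "k t = (mu / (1 - exp (- mu * D))) *\<^sub>R (exp (- mu * t) *\<^sub>R f t)" for t
  have eq: "trunc_exp_density mu D t *\<^sub>R f t = indicator {0..<D} t *\<^sub>R k t" for t
    by (simp add: trunc_exp_density_def k_def)
  have "set_integrable lborel {0..D} k"
    unfolding k_def by (intro borel_integrable_atLeastAtMost' continuous_intros continuous_on_subset[OF f]) auto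
  then have k_int: "set_integrable lborel {0..<D} k"
    by (rule set_integrable_subset) auto
  then show "integrable lborel (\<lambda>t. trunc_exp_density mu D t *\<^sub>R f t)"
    by (simp add: eq set_integrable_def)
  have "(\<integral>t. trunc_exp_density mu D t *\<^sub>R f t \<partial>lborel) = integral {0..<D} k"
    using set_borel_integral_eq_integral(2)[OF k_int] by (simp add: eq set_lebesgue_integral_def)
  also have "\<dots> = integral {0..D} k"
    by (rule integral_spike_set) (auto intro: negligible_subset[OF negligible_sing[of D]])
  also have "\<dots> = (mu / (1 - exp (- mu * D))) *\<^sub>R integral {0..D} (\<lambda>t. exp (- mu * t) *\<^sub>R f t)"
    by (simp only: k_def[abs_def] integral_cmul)
  finally show "(\<integral>t. trunc_exp_density mu D t *\<^sub>R f t \<partial>lborel)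
      = (mu / (1 - exp (- mu * D))) *\<^sub>R integral {0..D} (\<lambda>t. exp (- mu * t) *\<^sub>R f t)" .
qed

lemma
  fixes f :: "real \<Rightarrow> 'v::euclidean_space"
  assumes mu: "0 < mu" and D: "0 < D" and f: "continuous_on UNIV f"
  shows integrable_trunc_exp_measure: "integrable (trunc_exp_measure mu D) f"
    and integral_trunc_exp_measure: "(\<integral>t. f t \<partial>trunc_exp_measure mu D)
      = (1 / (1 - exp (- mu * D))) *\<^sub>R (mu *\<^sub>R integral {0..D} (\<lambda>t. exp (- mu * t) *\<^sub>R f t))"
proof -
  have f_meas: "f \<in> borel_measurable lborel" using f by (simp add: borel_measurable_continuous_onI)
  have nonneg: "AE t in lborel. 0 \<le> trunc_exp_density mu D t"
    using trunc_exp_density_nonneg[OF mu D] by simp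
  show "integrable (trunc_exp_measure mu D) f"
    unfolding trunc_exp_measure_def
    using integrable_density[OF f_meas _ nonneg] integrable_trunc_exp_density[OF f] by simp
  show "(\<integral>t. f t \<partial>trunc_exp_measure mu D)
      = (1 / (1 - exp (- mu * D))) *\<^sub>R (mu *\<^sub>R integral {0..D} (\<lambda>t. exp (- mu * t) *\<^sub>R f t))"
    unfolding trunc_exp_measure_def
    using integral_density[OF f_meas _ nonneg] integral_trunc_exp_density[OF f] by simp
qed

lemma prob_space_trunc_exp_measure:
  assumes mu: "0 < mu" and D: "0 < D"
  shows "prob_space (trunc_exp_measure mu D)"
proof
  have "exp (- mu * D) < 1" using mu D by simp
  have "(\<integral>t. trunc_exp_density mu D t \<partial>lborel) = 1"
    using integral_trunc_exp_density[of "\<lambda>_. 1::real" mu D] integral_exp_neg[of mu D] mu D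
      \<open>exp (- mu * D) < 1\<close>
    by simp
  then have "(\<integral>\<^sup>+t. ennreal (trunc_exp_density mu D t) \<partial>lborel) = 1"
    using integrable_trunc_exp_density[of "\<lambda>_. 1::real" mu D] trunc_exp_density_nonneg[OF mu D]
    by (subst nn_integral_eq_integral) auto
  then show "emeasure (trunc_exp_measure mu D) (space (trunc_exp_measure mu D)) = 1"
    by (simp add: trunc_exp_measure_def emeasure_density)
qed

section \<open>Moments of mixtures\<close>

lemma bounded_linear_trace: "bounded_linear (trace :: real^'n^'n \<Rightarrow> real)"
  unfolding linear_conv_bounded_linear[symmetric]
  by (rule linearI) (simp_all add: trace_def sum.distrib sum_distrib_left)

lemma trace_outer_self: "trace (outer x x) = norm x ^ 2"
  by (simp add: power2_norm_eq_inner inner_vec_def trace_def outer_def)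

lemma norm_outer_le: "norm (outer (a::real^'a) (b::real^'b)) \<le> real CARD('a) * real CARD('b) * (norm a * norm b)"
proof -
  have "norm (outer a b) \<le> (\<Sum>i\<in>UNIV. \<Sum>j\<in>UNIV. \<bar>outer a b $ i $ j\<bar>)" by (rule norm_le_sum_abs_entries)
  also have "\<dots> \<le> (\<Sum>i\<in>(UNIV::'a set). \<Sum>j\<in>(UNIV::'b set). norm a * norm b)"
    by (intro sum_mono) (auto simp: outer_def abs_mult intro!: mult_mono component_le_norm_cart)
  finally show ?thesis by simp
qed

lemma
  fixes M :: "(real^'n) measure"
  assumes M: "finite_measure M" and sets: "sets M = sets borel"
    and sq: "integrable M (\<lambda>x. norm x ^ 2)"
  shows integrable_first_moment: "integrable M (\<lambda>x. x)"
    and integrable_second_moment: "integrable M (\<lambda>x. outer x x)"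
proof -
  have "norm x \<le> 1 + norm x ^ 2" for x :: "real^'n"
  proof (cases "norm x \<le> 1")
    case True then show ?thesis using zero_le_power2[of "norm x"] by linarith
  next
    case False
    then have "norm x * 1 \<le> norm x * norm x" by (intro mult_left_mono) auto
    then show ?thesis by (simp add: power2_eq_square)
  qed
  then show "integrable M (\<lambda>x. x)"
    by (intro Bochner_Integration.integrable_bound[OF Bochner_Integration.integrable_add[OF finite_measure.integrable_const[OF M, of "1::real"] sq]])
      (auto simp: measurable_cong_sets[OF sets refl])
  show "integrable M (\<lambda>x. outer x x)"
  proof (rule Bochner_Integration.integrable_bound[OF integrable_mult_right[OF sq]])
    show "(\<lambda>x. outer x x) \<in> borel_measurable M"
      by (simp add: measurable_cong_sets[OF sets refl] borel_measurable_continuous_onI continuous_intros)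
    show "AE x in M. norm (outer x x) \<le> norm (real CARD('n) * real CARD('n) * norm x ^ 2)"
      using norm_outer_le[of x x for x] by (intro AE_I2) (simp add: power2_eq_square)
  qed
qed

lemma
  fixes f :: "'a \<Rightarrow> real^'n"
  assumes M: "prob_space M" and f: "integrable M f" and ff: "integrable M (\<lambda>x. outer (f x) (f x))"
  shows integrable_outer_diff: "integrable M (\<lambda>x. outer (f x - z) (f x - z))"
    and integral_outer_diff: "(\<integral>x. outer (f x - z) (f x - z) \<partial>M)
      = (\<integral>x. outer (f x) (f x) \<partial>M) - outer (\<integral>x. f x \<partial>M) z - outer z (\<integral>x. f x \<partial>M) + outer z z"
proof -
  have expand: "outer (f x - z) (f x - z) = outer (f x) (f x) - outer (f x) z - outer z (f x) + outer z z" for x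
    by (simp add: outer_diff_left outer_diff_right)
  have left: "bounded_linear (\<lambda>v. outer v z)" and right: "bounded_linear (\<lambda>v. outer z v)"
    by (rule bounded_bilinear.bounded_linear_left bounded_bilinear.bounded_linear_right,
        rule bounded_bilinear_outer)+
  note integrable = integrable_bounded_linear[OF left f] integrable_bounded_linear[OF right f]
    finite_measure.integrable_const[OF prob_space.finite_measure[OF M]]
  show "integrable M (\<lambda>x. outer (f x - z) (f x - z))"
    unfolding expand by (intro Bochner_Integration.integrable_add Bochner_Integration.integrable_diff ff integrable)
  show "(\<integral>x. outer (f x - z) (f x - z) \<partial>M)
      = (\<integral>x. outer (f x) (f x) \<partial>M) - outer (\<integral>x. f x \<partial>M) z - outer z (\<integral>x. f x \<partial>M) + outer z z"
    unfolding expand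
    using integral_bounded_linear[OF left f] integral_bounded_linear[OF right f] prob_space.prob_space[OF M]
    by (simp add: ff integrable)
qed

lemma integral_outer_diff_eq_covariance:
  fixes f :: "'a \<Rightarrow> real^'n"
  assumes M: "prob_space M" and f: "integrable M f" and ff: "integrable M (\<lambda>x. outer (f x) (f x))"
    and mean: "(\<integral>x. f x \<partial>M) = mv" and cov: "(\<integral>x. outer (f x - mv) (f x - mv) \<partial>M) = S"
  shows "(\<integral>x. outer (f x - z) (f x - z) \<partial>M) = S + outer (mv - z) (mv - z)"
proof -
  have "(\<integral>x. outer (f x) (f x) \<partial>M) = S + outer mv mv"
    using integral_outer_diff[OF M f ff, of mv] mean cov by (simp add: algebra_simps)
  then show ?thesis
    using integral_outer_diff[OF M f ff, of z] mean by (simp add: outer_diff_left outer_diff_right algebra_simps)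
qed

text \<open>The library's \<open>integral_bind\<close> only covers bounded functions.\<close>

lemma integral_bind_nonneg:
  fixes g :: "'b \<Rightarrow> real"
  assumes K: "K \<in> M \<rightarrow>\<^sub>M subprob_algebra N"
    and g: "g \<in> borel_measurable N" and nonneg: "\<And>y. 0 \<le> g y"
    and int: "integrable (M \<bind> K) g"
  shows "integrable M (\<lambda>x. \<integral>y. g y \<partial>K x)"
    and "(\<integral>y. g y \<partial>(M \<bind> K)) = (\<integral>x. \<integral>y. g y \<partial>K x \<partial>M)"
    and "AE x in M. integrable (K x) g"
proof -
  have bind: "(\<integral>\<^sup>+y. ennreal (g y) \<partial>(M \<bind> K)) = (\<integral>\<^sup>+x. \<integral>\<^sup>+y. ennreal (g y) \<partial>K x \<partial>M)"
    by (rule nn_integral_bind[OF _ K]) (use g in measurable)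
  have finite: "(\<integral>\<^sup>+y. ennreal (g y) \<partial>(M \<bind> K)) = ennreal (\<integral>y. g y \<partial>(M \<bind> K))"
    using int nonneg by (intro nn_integral_eq_integral) auto
  have "AE x in M. (\<integral>\<^sup>+y. ennreal (g y) \<partial>K x) \<noteq> \<infinity>"
    by (rule nn_integral_PInf_AE) (use K g in measurable, simp add: bind[symmetric] finite)
  then have ae: "AE x in M. integrable (K x) g \<and> (\<integral>\<^sup>+y. ennreal (g y) \<partial>K x) = ennreal (\<integral>y. g y \<partial>K x)"
  proof (rule AE_mp, intro AE_I2 impI)
    fix x assume x: "x \<in> space M" and "(\<integral>\<^sup>+y. ennreal (g y) \<partial>K x) \<noteq> \<infinity>"
    moreover have "g \<in> borel_measurable (K x)"
      using g by (simp add: measurable_cong_sets[OF subprob_measurableD(2)[OF K x] refl])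
    ultimately have "integrable (K x) g" using nonneg by (simp add: integrable_iff_bounded less_top)
    then show "integrable (K x) g \<and> (\<integral>\<^sup>+y. ennreal (g y) \<partial>K x) = ennreal (\<integral>y. g y \<partial>K x)"
      using nonneg by (simp add: nn_integral_eq_integral)
  qed
  then show "AE x in M. integrable (K x) g" by auto
  have nn_inner: "(\<integral>\<^sup>+x. ennreal (\<integral>y. g y \<partial>K x) \<partial>M) = ennreal (\<integral>y. g y \<partial>(M \<bind> K))"
    using ae by (subst finite[symmetric], subst bind) (intro nn_integral_cong_AE, auto)
  have inner_nonneg: "0 \<le> (\<integral>y. g y \<partial>K x)" for x using nonneg by (simp add: integral_nonneg)
  have inner_meas: "(\<lambda>x. \<integral>y. g y \<partial>K x) \<in> borel_measurable M"
    by (rule measurable_compose[OF K integral_measurable_subprob_algebra[OF g]])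
  show int_inner: "integrable M (\<lambda>x. \<integral>y. g y \<partial>K x)"
    using inner_meas nn_inner inner_nonneg by (simp add: integrable_iff_bounded)
  have "ennreal (\<integral>x. \<integral>y. g y \<partial>K x \<partial>M) = ennreal (\<integral>y. g y \<partial>(M \<bind> K))"
    using nn_integral_eq_integral[OF int_inner] inner_nonneg nn_inner by simp
  then show "(\<integral>y. g y \<partial>(M \<bind> K)) = (\<integral>x. \<integral>y. g y \<partial>K x \<partial>M)"
    using inner_nonneg nonneg by (simp add: integral_nonneg)
qed

lemma integral_bind_real:
  fixes f :: "'b \<Rightarrow> real"
  assumes K: "K \<in> M \<rightarrow>\<^sub>M subprob_algebra N"
    and f: "f \<in> borel_measurable N" and int: "integrable (M \<bind> K) f"
  shows "integrable M (\<lambda>x. \<integral>y. f y \<partial>K x)"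
    and "(\<integral>y. f y \<partial>(M \<bind> K)) = (\<integral>x. \<integral>y. f y \<partial>K x \<partial>M)"
proof -
  define fp where "fp y = max (f y) 0" for y
  define fn where "fn y = max (- f y) 0" for y
  have meas: "fp \<in> borel_measurable N" "fn \<in> borel_measurable N" unfolding fp_def fn_def using f by measurable
  have parts_int: "integrable (M \<bind> K) fp" "integrable (M \<bind> K) fn"
    unfolding fp_def fn_def using int by auto
  have parts_nonneg: "\<And>y. 0 \<le> fp y" "\<And>y. 0 \<le> fn y" by (simp_all add: fp_def fn_def)
  note P = integral_bind_nonneg[OF K meas(1) parts_nonneg(1) parts_int(1)]
    and Q = integral_bind_nonneg[OF K meas(2) parts_nonneg(2) parts_int(2)]
  have split: "f y = fp y - fn y" for y by (simp add: fp_def fn_def max_def)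
  have ae: "AE x in M. (\<integral>y. f y \<partial>K x) = (\<integral>y. fp y \<partial>K x) - (\<integral>y. fn y \<partial>K x)"
    using P(3) Q(3) by eventually_elim (simp add: split[abs_def])
  have m1: "(\<lambda>x. \<integral>y. f y \<partial>K x) \<in> borel_measurable M"
    by (rule measurable_compose[OF K integral_measurable_subprob_algebra[OF f]])
  have m2: "(\<lambda>x. (\<integral>y. fp y \<partial>K x) - (\<integral>y. fn y \<partial>K x)) \<in> borel_measurable M"
    using measurable_compose[OF K integral_measurable_subprob_algebra[OF meas(1)]]
      measurable_compose[OF K integral_measurable_subprob_algebra[OF meas(2)]] by measurable
  show "integrable M (\<lambda>x. \<integral>y. f y \<partial>K x)"
    using integrable_cong_AE[OF m1 m2 ae] P(1) Q(1) by (auto simp: fp_def fn_def)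
  have "(\<integral>y. f y \<partial>(M \<bind> K)) = (\<integral>y. fp y \<partial>(M \<bind> K)) - (\<integral>y. fn y \<partial>(M \<bind> K))"
    using parts_int by (simp add: split[abs_def])
  also have "\<dots> = (\<integral>x. (\<integral>y. fp y \<partial>K x) - (\<integral>y. fn y \<partial>K x) \<partial>M)"
    using P Q by (simp add: fp_def fn_def)
  also have "\<dots> = (\<integral>x. \<integral>y. f y \<partial>K x \<partial>M)"
    by (rule integral_cong_AE[OF m2 m1]) (use ae in auto)
  finally show "(\<integral>y. f y \<partial>(M \<bind> K)) = (\<integral>x. \<integral>y. f y \<partial>K x \<partial>M)" .
qed

lemma integral_bind_euclidean:
  fixes f :: "'b \<Rightarrow> 'v::euclidean_space"
  assumes K: "K \<in> M \<rightarrow>\<^sub>M subprob_algebra N"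
    and f: "f \<in> borel_measurable N" and int: "integrable (M \<bind> K) f"
  shows "(\<integral>y. f y \<partial>(M \<bind> K)) = (\<integral>x. \<integral>y. f y \<partial>K x \<partial>M)"
proof -
  have "AE x in M. integrable (K x) (\<lambda>y. norm (f y))"
    using integral_bind_nonneg(3)[OF K _ _ integrable_norm[OF int]] f by simp
  then have K_int: "AE x in M. integrable (K x) f"
  proof (rule AE_mp, intro AE_I2 impI)
    fix x assume "x \<in> space M" "integrable (K x) (\<lambda>y. norm (f y))"
    moreover have "f \<in> borel_measurable (K x)"
      using f by (simp add: measurable_cong_sets[OF subprob_measurableD(2)[OF K \<open>x \<in> space M\<close>] refl])
    ultimately show "integrable (K x) f" using integrable_norm_iff by blast
  qed
  define h where "h x = (\<integral>y. f y \<partial>K x)" for x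
  have h_meas: "h \<in> borel_measurable M"
    unfolding h_def by (rule measurable_compose[OF K integral_measurable_subprob_algebra[OF f]])
  have component: "integrable M (\<lambda>x. h x \<bullet> b) \<and> (\<integral>x. h x \<bullet> b \<partial>M) = (\<integral>y. f y \<bullet> b \<partial>(M \<bind> K))"
    if "b \<in> Basis" for b
  proof -
    have fb: "(\<lambda>y. f y \<bullet> b) \<in> borel_measurable N" using f by measurable
    have ae: "AE x in M. h x \<bullet> b = (\<integral>y. f y \<bullet> b \<partial>K x)"
      using K_int by eventually_elim (simp add: h_def)
    have m1: "(\<lambda>x. h x \<bullet> b) \<in> borel_measurable M" using h_meas by measurable
    have m2: "(\<lambda>x. \<integral>y. f y \<bullet> b \<partial>K x) \<in> borel_measurable M"
      by (rule measurable_compose[OF K integral_measurable_subprob_algebra[OF fb]])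
    show ?thesis
      using integrable_cong_AE[OF m1 m2 ae] integral_cong_AE[OF m1 m2 ae] integral_bind_real[OF K fb] int
      by simp
  qed
  then have "integrable M (\<lambda>x. \<Sum>b\<in>Basis. (h x \<bullet> b) *\<^sub>R b)" by auto
  then have "integrable M h" by (simp add: euclidean_representation)
  show ?thesis
  proof (rule euclidean_eqI)
    fix b :: 'v assume b: "b \<in> Basis"
    have "(\<integral>y. f y \<partial>(M \<bind> K)) \<bullet> b = (\<integral>y. f y \<bullet> b \<partial>(M \<bind> K))" using int by simp
    also have "\<dots> = (\<integral>x. h x \<partial>M) \<bullet> b" using component[OF b] \<open>integrable M h\<close> by simp
    finally show "(\<integral>y. f y \<partial>(M \<bind> K)) \<bullet> b = (\<integral>x. \<integral>y. f y \<partial>K x \<partial>M) \<bullet> b" by (simp add: h_def)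
  qed
qed

lemma integrable_bind_nonneg:
  fixes g :: "'b \<Rightarrow> real"
  assumes K: "K \<in> M \<rightarrow>\<^sub>M subprob_algebra N" and M: "space M \<noteq> {}"
    and g: "g \<in> borel_measurable N" and nonneg: "\<And>y. 0 \<le> g y"
    and K_int: "AE x in M. integrable (K x) g" and int: "integrable M (\<lambda>x. \<integral>y. g y \<partial>K x)"
  shows "integrable (M \<bind> K) g"
proof -
  have "(\<integral>\<^sup>+y. ennreal (g y) \<partial>(M \<bind> K)) = (\<integral>\<^sup>+x. \<integral>\<^sup>+y. ennreal (g y) \<partial>K x \<partial>M)"
    by (rule nn_integral_bind[OF _ K]) (use g in measurable)
  also have "\<dots> = (\<integral>\<^sup>+x. ennreal (\<integral>y. g y \<partial>K x) \<partial>M)"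
    using K_int nonneg by (intro nn_integral_cong_AE) (auto simp: nn_integral_eq_integral)
  also have "\<dots> = ennreal (\<integral>x. \<integral>y. g y \<partial>K x \<partial>M)"
    using int nonneg by (intro nn_integral_eq_integral) (auto intro!: AE_I2 Bochner_Integration.integral_nonneg)
  finally show ?thesis
    using g by (auto simp: integrable_iff_bounded nonneg measurable_cong_sets[OF sets_bind[OF sets_kernel[OF K] M] refl])
qed

lemma kernel_moments:
  fixes N :: "(real^'n) measure"
  assumes N: "prob_space N" and sets: "sets N = sets borel"
    and sq: "integrable N (\<lambda>x. norm x ^ 2)"
    and mean: "(\<integral>x. x \<partial>N) = mv" and cov: "(\<integral>x. outer (x - mv) (x - mv) \<partial>N) = S"
  shows "(\<integral>x. outer (x - z) (x - z) \<partial>N) = S + outer (mv - z) (mv - z)"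
    and "(\<integral>x. norm x ^ 2 \<partial>N) = trace (S + outer mv mv)"
proof -
  note moments = integrable_first_moment[OF prob_space.finite_measure[OF N] sets sq]
    integrable_second_moment[OF prob_space.finite_measure[OF N] sets sq]
  show shift: "(\<integral>x. outer (x - z) (x - z) \<partial>N) = S + outer (mv - z) (mv - z)" for z
    by (rule integral_outer_diff_eq_covariance[OF N moments mean cov])
  have "(\<integral>x. norm x ^ 2 \<partial>N) = (\<integral>x. trace (outer (x - 0) (x - 0)) \<partial>N)"
    by (simp add: trace_outer_self)
  also have "\<dots> = trace (\<integral>x. outer (x - 0) (x - 0) \<partial>N)"
    by (rule integral_bounded_linear[OF bounded_linear_trace integrable_outer_diff[OF N moments]])
  finally show "(\<integral>x. norm x ^ 2 \<partial>N) = trace (S + outer mv mv)" by (simp add: shift[of 0, simplified])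
qed

lemma integral_bind_mean_covariance:
  fixes K :: "'a \<Rightarrow> (real^'n) measure" and m :: "'a \<Rightarrow> real^'n" and C :: "'a \<Rightarrow> real^'n^'n"
  assumes M: "prob_space M" and K: "K \<in> M \<rightarrow>\<^sub>M prob_algebra borel"
    and K_moments: "AE t in M. integrable (K t) (\<lambda>x. norm x ^ 2) \<and> (\<integral>x. x \<partial>K t) = m t
      \<and> (\<integral>x. outer (x - m t) (x - m t) \<partial>K t) = C t"
    and m: "integrable M m" and mm: "integrable M (\<lambda>t. outer (m t) (m t))" and C: "integrable M C"
  shows "(\<integral>x. x \<partial>(M \<bind> K)) = (\<integral>t. m t \<partial>M)"
    and "(\<integral>x. outer (x - z) (x - z) \<partial>(M \<bind> K))
      = (\<integral>t. C t \<partial>M) + (\<integral>t. outer (m t - z) (m t - z) \<partial>M)"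
proof -
  have K_sub: "K \<in> M \<rightarrow>\<^sub>M subprob_algebra borel" by (rule measurable_prob_algebraD[OF K])
  have K_space: "prob_space (K t)" "sets (K t) = sets borel" if "t \<in> space M" for t
    using measurable_space[OF K that] by (simp_all add: space_prob_algebra)
  have bind_sets: "sets (M \<bind> K) = sets borel"
    using K_space(2) prob_space.not_empty[OF M] by (rule sets_bind)
  have bind_prob: "prob_space (M \<bind> K)"
    using K_space(1) by (intro prob_space.prob_space_bind[OF M _ K_sub]) auto
  have moments: "AE t in M. (\<forall>z. (\<integral>x. outer (x - z) (x - z) \<partial>K t) = C t + outer (m t - z) (m t - z))
      \<and> (\<integral>x. norm x ^ 2 \<partial>K t) = trace (C t + outer (m t) (m t))"
    using AE_space K_moments
  proof eventually_elim
    case (elim t)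
    then have "integrable (K t) (\<lambda>x. norm x ^ 2)" "(\<integral>x. x \<partial>K t) = m t"
      "(\<integral>x. outer (x - m t) (x - m t) \<partial>K t) = C t"
      by auto
    from kernel_moments[OF K_space[OF elim(1)] this] show ?case by (intro conjI allI)
  qed
  have "integrable M (\<lambda>t. trace (C t + outer (m t) (m t)))"
    by (intro integrable_bounded_linear[OF bounded_linear_trace] Bochner_Integration.integrable_add C mm)
  moreover have "(\<lambda>t. \<integral>x. norm x ^ 2 \<partial>K t) \<in> borel_measurable M"
    by (rule measurable_compose[OF K_sub integral_measurable_subprob_algebra]) simp
  moreover have "AE t in M. trace (C t + outer (m t) (m t)) = (\<integral>x. norm x ^ 2 \<partial>K t)"
    using moments by eventually_elim simp
  ultimately have "integrable M (\<lambda>t. \<integral>x. norm x ^ 2 \<partial>K t)" by (rule integrable_cong_AE_imp)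
  then have "integrable (M \<bind> K) (\<lambda>x. norm x ^ 2)"
    using K_moments prob_space.not_empty[OF M] by (intro integrable_bind_nonneg[OF K_sub]) auto
  note bind_moments = integrable_first_moment[OF prob_space.finite_measure[OF bind_prob] bind_sets this]
    integrable_second_moment[OF prob_space.finite_measure[OF bind_prob] bind_sets this]
  have "(\<integral>x. x \<partial>(M \<bind> K)) = (\<integral>t. (\<integral>x. x \<partial>K t) \<partial>M)"
    by (rule integral_bind_euclidean[OF K_sub _ bind_moments(1)]) simp
  also have "\<dots> = (\<integral>t. m t \<partial>M)"
    using K_moments m by (intro integral_cong_AE) (auto intro: measurable_compose[OF K_sub])
  finally show "(\<integral>x. x \<partial>(M \<bind> K)) = (\<integral>t. m t \<partial>M)" .
  have outer_meas: "(\<lambda>x. outer (x - z) (x - z)) \<in> borel_measurable borel"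
    by (intro borel_measurable_continuous_onI continuous_intros)
  have "(\<integral>x. outer (x - z) (x - z) \<partial>(M \<bind> K)) = (\<integral>t. (\<integral>x. outer (x - z) (x - z) \<partial>K t) \<partial>M)"
    by (rule integral_bind_euclidean[OF K_sub outer_meas integrable_outer_diff[OF bind_prob bind_moments]])
  also have "\<dots> = (\<integral>t. C t + outer (m t - z) (m t - z) \<partial>M)"
    using moments C integrable_outer_diff[OF M m mm, of z]
    by (intro integral_cong_AE measurable_compose[OF K_sub integral_measurable_subprob_algebra[OF outer_meas]])
      auto
  also have "\<dots> = (\<integral>t. C t \<partial>M) + (\<integral>t. outer (m t - z) (m t - z) \<partial>M)"
    by (rule Bochner_Integration.integral_add[OF C integrable_outer_diff[OF M m mm]])
  finally show "(\<integral>x. outer (x - z) (x - z) \<partial>(M \<bind> K))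
      = (\<integral>t. C t \<partial>M) + (\<integral>t. outer (m t - z) (m t - z) \<partial>M)" .
qed

theorem proposition1:
  fixes A :: "real^'n^'n" and u :: "real^'n" and L :: "real^'b^'n"
    and Q :: "real^'b^'b" and xa :: "real^'n" and Pa :: "real^'n^'n"
    and mu \<Delta> :: real
    and K :: "real \<Rightarrow> (real^'n) measure"
  assumes mu_pos: "mu > 0" and Delta_pos: "\<Delta> > 0"
    and Q_cov: "cov_matrix Q" and Pa_cov: "cov_matrix Pa"
  defines "m \<equiv> (\<lambda>t. mexp (t *\<^sub>R A) *v xa + integral {0..t} (\<lambda>\<tau>. mexp (\<tau> *\<^sub>R A)) *v u)"
    and "C \<equiv> (\<lambda>t. mexp (t *\<^sub>R A) ** Pa ** mexp (t *\<^sub>R transpose A)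
              + integral {0..t} (\<lambda>\<tau>. mexp (\<tau> *\<^sub>R A) ** L ** Q ** transpose L ** mexp (\<tau> *\<^sub>R transpose A)))"
    and "c \<equiv> mu / (1 - exp (- mu * \<Delta>))"
  defines "pk \<equiv> (\<lambda>t::real. c * exp (- mu * t) * indicator {0..<\<Delta>} t)"
  defines "MT \<equiv> density lborel (\<lambda>t. ennreal (pk t))"
  assumes K_meas: "K \<in> borel \<rightarrow>\<^sub>M prob_algebra borel"
    and K_int: "\<And>t. t \<in> {0..<\<Delta>} \<Longrightarrow> integrable (K t) (\<lambda>x. norm x ^ 2)"
    and K_mean: "\<And>t. t \<in> {0..<\<Delta>} \<Longrightarrow> (\<integral>x. x \<partial>K t) = m t"
    and K_cov: "\<And>t. t \<in> {0..<\<Delta>} \<Longrightarrow> (\<integral>x. outer (x - m t) (x - m t) \<partial>K t) = C t"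
  defines "Mk \<equiv> MT \<bind> K"
    and "xb1 \<equiv> c *\<^sub>R (\<chi> i. mexp (\<Delta> *\<^sub>R Ab_mat A mu xa) $ Some i $ None)"
    and "xb2 \<equiv> c *\<^sub>R (\<chi> i. mexp (\<Delta> *\<^sub>R Abu_mat A mu u) $ Some (Some i) $ None)"
  defines "xb \<equiv> xb1 + xb2"
    and "Am \<equiv> A - (mu / 2) *\<^sub>R mat 1"
    and "Cb \<equiv> L ** Q ** transpose L + mu *\<^sub>R Pa"
  defines "EC \<equiv> - (exp (- mu * \<Delta>) / (1 - exp (- mu * \<Delta>))) *\<^sub>R
               integral {0..\<Delta>} (\<lambda>\<tau>. mexp (\<tau> *\<^sub>R A) ** L ** Q ** transpose L ** mexp (\<tau> *\<^sub>R transpose A))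
             + (1 / (1 - exp (- mu * \<Delta>))) *\<^sub>R
               integral {0..\<Delta>} (\<lambda>t. mexp (t *\<^sub>R Am) ** Cb ** mexp (t *\<^sub>R transpose Am))"
  defines "Sxx \<equiv> c *\<^sub>R integral {0..\<Delta>} (\<lambda>t. mexp (t *\<^sub>R Am) ** outer xa xa ** mexp (t *\<^sub>R transpose Am))"
    and "Sxu \<equiv> c *\<^sub>R integral {0..\<Delta>} (\<lambda>t. mexp (t *\<^sub>R (A - mu *\<^sub>R mat 1)) ** outer xa u
               ** integral {0..t} (\<lambda>\<tau>. mexp (\<tau> *\<^sub>R transpose A)))"
    and "Suu1 \<equiv> (exp (- mu * \<Delta>) / (1 - exp (- mu * \<Delta>))) *\<^sub>R
               (integral {0..\<Delta>} (\<lambda>\<tau>. mexp (\<tau> *\<^sub>R A)) ** outer u u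
                ** integral {0..\<Delta>} (\<lambda>\<tau>. mexp (\<tau> *\<^sub>R transpose A)))"
    and "Suu2 \<equiv> (1 / (1 - exp (- mu * \<Delta>))) *\<^sub>R integral {0..\<Delta>} (\<lambda>t. mexp (t *\<^sub>R (A - mu *\<^sub>R mat 1))
               ** outer u u ** integral {0..t} (\<lambda>\<tau>. mexp (\<tau> *\<^sub>R transpose A)))"
  defines "Suu \<equiv> - Suu1 + Suu2 + transpose Suu2"
  defines "Cm \<equiv> Sxx + Sxu + transpose Sxu + Suu - outer xb xb"
  shows "(\<integral>t. m t \<partial>MT) = xb
    \<and> (\<integral>x. x \<partial>Mk) = xb
    \<and> (\<integral>t. C t \<partial>MT) = EC
    \<and> (\<integral>t. outer (m t - xb) (m t - xb) \<partial>MT) = Cm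
    \<and> (\<integral>x. outer (x - xb) (x - xb) \<partial>Mk) = Cm + EC"
proof -
  have MT_eq: "MT = trunc_exp_measure mu \<Delta>"
    by (simp add: MT_def pk_def c_def trunc_exp_measure_def trunc_exp_density_def)
  have MT_prob: "prob_space MT" unfolding MT_eq by (rule prob_space_trunc_exp_measure[OF mu_pos Delta_pos])
  have m_cont: "continuous_on UNIV m" unfolding m_def by (intro continuous_intros)
  have C_cont: "continuous_on UNIV C" unfolding C_def by (intro continuous_intros)
  have mm_cont: "continuous_on UNIV (\<lambda>t. outer (m t) (m t))" using m_cont by (intro continuous_intros)
  note integrable_MT = integrable_trunc_exp_measure[OF mu_pos Delta_pos, folded MT_eq]
  note integral_MT = integral_trunc_exp_measure[OF mu_pos Delta_pos, folded MT_eq]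
  note D = less_imp_le[OF Delta_pos]
  have mean: "(\<integral>t. m t \<partial>MT) = xb"
    unfolding integral_MT[OF m_cont] unfolding m_def integral_exp_neg_mean[OF less_imp_neq[OF mu_pos, symmetric] D]
    by (simp add: xb_def xb1_def xb2_def c_def scaleR_add_right)
  have "(\<integral>t. C t \<partial>MT) = (1 / (1 - exp (- mu * \<Delta>))) *\<^sub>R (mu *\<^sub>R integral {0..\<Delta>} (\<lambda>t. exp (- mu * t) *\<^sub>R C t))"
    by (rule integral_MT[OF C_cont])
  also have "mu *\<^sub>R integral {0..\<Delta>} (\<lambda>t. exp (- mu * t) *\<^sub>R C t)
      = integral {0..\<Delta>} (\<lambda>t. mexp (t *\<^sub>R Am) ** Cb ** mexp (t *\<^sub>R transpose Am))
        - exp (- mu * \<Delta>) *\<^sub>R integral {0..\<Delta>} (\<lambda>\<tau>. mexp (\<tau> *\<^sub>R A) ** L ** Q ** transpose L ** mexp (\<tau> *\<^sub>R transpose A))"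
    unfolding C_def Am_def Cb_def
    by (rule integral_exp_neg_covariance[OF D, where G="L ** Q ** transpose L", unfolded matrix_mul_assoc])
  finally have mean_C: "(\<integral>t. C t \<partial>MT) = EC" by (simp add: EC_def scaleR_diff_right)
  have "(\<integral>t. outer (m t) (m t) \<partial>MT) = Sxx + Sxu + transpose Sxu + Suu"
    unfolding integral_MT[OF mm_cont] unfolding m_def integral_exp_neg_outer_mean[OF D]
    by (simp add: Sxx_def Sxu_def Suu_def Suu1_def Suu2_def Am_def c_def scaleR_add_right
        scaleR_diff_right transpose_scalar)
  then have cov_m: "(\<integral>t. outer (m t - xb) (m t - xb) \<partial>MT) = Cm"
    using integral_outer_diff[OF MT_prob integrable_MT[OF m_cont] integrable_MT[OF mm_cont], of xb] mean
    by (simp add: Cm_def)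
  have K_MT: "K \<in> MT \<rightarrow>\<^sub>M prob_algebra borel"
    using K_meas by (simp add: MT_eq measurable_cong_sets[OF sets_trunc_exp_measure refl])
  have "AE t in MT. t \<in> {0..<\<Delta>}" unfolding MT_eq by (rule AE_trunc_exp_measure)
  then have "AE t in MT. integrable (K t) (\<lambda>x. norm x ^ 2) \<and> (\<integral>x. x \<partial>K t) = m t
      \<and> (\<integral>x. outer (x - m t) (x - m t) \<partial>K t) = C t"
    by eventually_elim (intro conjI K_int K_mean K_cov)
  note mixture = integral_bind_mean_covariance[OF MT_prob K_MT this
      integrable_MT[OF m_cont] integrable_MT[OF mm_cont] integrable_MT[OF C_cont], folded Mk_def]
  show ?thesis using mean mean_C cov_m mixture(1) mixture(2)[of xb] by (simp add: add.commute)
qed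

end
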